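(* Let $K$ be a discrete valuation field of characteristic $p>0$, and let $n\ge1$, $m\ge1$. (1) The sequence $$0\to\bigoplus_{j\ge0}\mathrm{fil}_{[m/p]}W_n(K)\xrightarrow{h}\bigoplus_{j\ge0}\mathrm{fil}_mW_n(K)\to\mathrm{fil}^F_mW_n(K)\to0$$ is exact, where the third arrow is $(x_j)_j\mapsto\sum_jF^j(x_j)$ and $h$ sends $(x_j)_j$ to $(y_j)_j$ with $y_0=F(x_0)$ and $y_j=F(x_j)-x_{j-1}$ for $j\ge1$. (2) The map $(x_i)_i\mapsto\sum_iF^i(x_i)$ induces an isomorphism $$\bigoplus_{i\ge0}\mathrm{fil}_mW_n(K)/\big(\mathrm{fil}_{[m/p]}W_n(K)+F(\mathrm{fil}_{[m/p]}W_n(K))\big)\xrightarrow{\ \simeq\ }\mathrm{fil}^F_mW_n(K)/\mathrm{fil}^F_{[m/p]}W_n(K).$$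
   Context: $v_K$ is the normalized valuation of $K$; $[x]$ is the integer part of $x$. $\mathrm{fil}_mW_n(K)=\{(f_{n-1},\dots,f_0)\in W_n(K)\mid p^jv_K(f_j)\ge -m\ (0\le j\le n-1)\}$, $F:W_n(K)\to W_n(K)$ is $(a_{n-1},\dots,a_0)\mapsto(a_{n-1}^p,\dots,a_0^p)$, and $\mathrm{fil}^F_mW_n(K)=\sum_{j\ge0}F^j(\mathrm{fil}_mW_n(K))$. Direct sums are over all $j\ge0$ (finitely supported families). *)

theory Defs
  imports "HOL-Library.Poly_Mapping" "HOL-Computational_Algebra.Primes" "HOL-Algebra.Algebra"
begin

type_synonym mpoly = "(nat \<Rightarrow>\<^sub>0 nat) \<Rightarrow>\<^sub>0 int"

definition mvar :: "nat \<Rightarrow> mpoly" where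
  "mvar i = Poly_Mapping.single (Poly_Mapping.single i 1) 1"

definition mpoly_eval :: "(nat \<Rightarrow> 'a::comm_ring_1) \<Rightarrow> mpoly \<Rightarrow> 'a" where
  "mpoly_eval x P = (\<Sum>mn\<in>Poly_Mapping.keys P. of_int (Poly_Mapping.lookup P mn) * (\<Prod>i\<in>Poly_Mapping.keys (mn::nat \<Rightarrow>\<^sub>0 nat). x i ^ Poly_Mapping.lookup mn i))"

definition mpoly_cdiv :: "nat \<Rightarrow> mpoly \<Rightarrow> mpoly" where
  "mpoly_cdiv d P = Poly_Mapping.map (\<lambda>c. c div int d) P"

definition wX :: "nat \<Rightarrow> mpoly" where "wX i = mvar (2*i)"
definition wY :: "nat \<Rightarrow> mpoly" where "wY i = mvar (2*i+1)"

definition ghost_poly :: "nat \<Rightarrow> (nat \<Rightarrow> mpoly) \<Rightarrow> nat \<Rightarrow> mpoly" where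
  "ghost_poly p Z k = (\<Sum>i\<le>k. of_nat (p^i) * (Z i) ^ (p^(k-i)))"

fun witt_add_polys :: "nat \<Rightarrow> nat \<Rightarrow> mpoly list" where
  "witt_add_polys p 0 = []"
| "witt_add_polys p (Suc k) =
     (let L = witt_add_polys p k in
      L @ [mpoly_cdiv (p^k) (ghost_poly p wX k + ghost_poly p wY k
               - (\<Sum>i<k. of_nat (p^i) * (L ! i) ^ (p^(k-i))))])"

definition witt_add_poly :: "nat \<Rightarrow> nat \<Rightarrow> mpoly" where
  "witt_add_poly p k = witt_add_polys p (Suc k) ! k"

text \<open>Witt vectors of length n over K: functions a with a i = 0 for i >= n;
  a = (a_0, ..., a_(n-1)) in the standard indexing.\<close>
definition witt_add :: "nat \<Rightarrow> nat \<Rightarrow> (nat \<Rightarrow> 'a::comm_ring_1) \<Rightarrow> (nat \<Rightarrow> 'a) \<Rightarrow> (nat \<Rightarrow> 'a)" where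
  "witt_add p n a b = (\<lambda>k. if k < n then
      mpoly_eval (\<lambda>v. if even v then a (v div 2) else b (v div 2)) (witt_add_poly p k) else 0)"

definition WittGroup :: "nat \<Rightarrow> nat \<Rightarrow> (nat \<Rightarrow> 'a::comm_ring_1) monoid" where
  "WittGroup p n = \<lparr>carrier = {a. \<forall>i\<ge>n. a i = 0}, monoid.mult = witt_add p n, monoid.one = (\<lambda>_. 0)\<rparr>"

definition witt_frob :: "nat \<Rightarrow> (nat \<Rightarrow> 'a::comm_ring_1) \<Rightarrow> (nat \<Rightarrow> 'a)" where
  "witt_frob p a = (\<lambda>i. a i ^ p)"

text \<open>v is a normalized discrete valuation on K, given on nonzero elements
  (v 0 = infinity is encoded by treating 0 separately).\<close>
definition normalized_dvf :: "('a::field \<Rightarrow> int) \<Rightarrow> bool" where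
  "normalized_dvf v \<longleftrightarrow>
     (\<forall>x y. x \<noteq> 0 \<longrightarrow> y \<noteq> 0 \<longrightarrow> v (x * y) = v x + v y) \<and>
     (\<forall>x y. x \<noteq> 0 \<longrightarrow> y \<noteq> 0 \<longrightarrow> x + y \<noteq> 0 \<longrightarrow> v (x + y) \<ge> min (v x) (v y)) \<and>
     (\<exists>\<pi>. \<pi> \<noteq> 0 \<and> v \<pi> = 1)"

text \<open>In the paper's indexing (f_(n-1),...,f_0) the condition is p^j v(f_j) >= -m;
  with f_j = a_(n-1-j) this reads p^(n-1-i) v(a_i) >= -m (with v(0) = infinity).\<close>
definition fil :: "nat \<Rightarrow> ('a::field \<Rightarrow> int) \<Rightarrow> nat \<Rightarrow> int \<Rightarrow> (nat \<Rightarrow> 'a) set" where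
  "fil p v n m = {a \<in> carrier (WittGroup p n).
      \<forall>i<n. a i \<noteq> 0 \<longrightarrow> int p ^ (n - 1 - i) * v (a i) \<ge> - m}"

text \<open>fil^F_m = sum over j of the subgroups F^j(fil_m), i.e. the subgroup generated by their union.\<close>
definition filF :: "nat \<Rightarrow> ('a::field \<Rightarrow> int) \<Rightarrow> nat \<Rightarrow> int \<Rightarrow> (nat \<Rightarrow> 'a) set" where
  "filF p v n m = generate (WittGroup p n) (\<Union>j. (witt_frob p ^^ j) ` fil p v n m)"

definition witt_dsum :: "nat \<Rightarrow> nat \<Rightarrow> (nat \<Rightarrow> 'a::comm_ring_1) set \<Rightarrow> (nat \<Rightarrow> nat \<Rightarrow> 'a) monoid" where
  "witt_dsum p n A = sum_group UNIV (\<lambda>j. (WittGroup p n)\<lparr>carrier := A\<rparr>)"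

definition frob_sum :: "nat \<Rightarrow> nat \<Rightarrow> (nat \<Rightarrow> nat \<Rightarrow> 'a::comm_ring_1) \<Rightarrow> (nat \<Rightarrow> 'a)" where
  "frob_sum p n x = finprod (WittGroup p n) (\<lambda>j. (witt_frob p ^^ j) (x j)) {j. x j \<noteq> (\<lambda>_. 0)}"

definition witt_h :: "nat \<Rightarrow> nat \<Rightarrow> (nat \<Rightarrow> nat \<Rightarrow> 'a::comm_ring_1) \<Rightarrow> (nat \<Rightarrow> nat \<Rightarrow> 'a)" where
  "witt_h p n x = (\<lambda>j. if j = 0 then witt_frob p (x 0)
      else witt_frob p (x j) \<otimes>\<^bsub>WittGroup p n\<^esub> inv\<^bsub>WittGroup p n\<^esub> (x (j - 1)))"

end

theory Submission
  imports Defs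
begin

text \<open>
  Witt vector addition is given by universal integer polynomials \<open>S\<^sub>k\<close>; they exist because the
  ghost components are additive and injective over \<open>\<int>\<close>, and Dwork's congruence
  \<open>\<phi>(Q) \<equiv> Q\<^sup>p mod p\<close> makes the defining divisions exact. Giving \<open>X\<^sub>i\<close> and \<open>Y\<^sub>i\<close> weight \<open>p\<^sup>i\<close>, the
  polynomial \<open>S\<^sub>k\<close> has weight at most \<open>p\<^sup>k\<close>, while \<open>a \<in> fil\<^sub>m\<close> says \<open>p\<^sup>n\<^sup>-\<^sup>1 v(a\<^sub>i) \<ge> -m p\<^sup>i\<close>; so the
  ultrametric inequality makes \<open>fil\<^sub>m\<close> a subgroup. In characteristic \<open>p\<close> Frobenius \<open>F\<close> is an injective
  endomorphism of \<open>W\<^sub>n(K)\<close> with \<open>F(fil\<^bsub>[m/p]\<^esub>) \<subseteq> fil\<^sub>m\<close> and \<open>F\<^sup>-\<^sup>1(fil\<^sub>m) = fil\<^bsub>[m/p]\<^esub>\<close>.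

  Both statements hold for any injective endomorphism \<open>F\<close> of an abelian group with subgroups
  \<open>Fs \<subseteq> Fm\<close>, \<open>F(Fs) \<subseteq> Fm\<close> and \<open>F\<^sup>-\<^sup>1(Fm) \<subseteq> Fs\<close>. The map \<open>\<Sum>\<^sub>j F\<^sup>j x\<^sub>j\<close> is additive onto the span of
  the \<open>F\<^sup>j(Fm)\<close>, and \<open>h\<close> telescopes into its kernel. Conversely a kernel element \<open>y\<close> is \<open>h(x)\<close> for the
  negated tails \<open>x\<^sub>j = -\<Sum>\<^sub>k F\<^sup>k y\<^sub>j\<^sub>+\<^sub>1\<^sub>+\<^sub>k\<close>, which lie in \<open>Fs\<close> by induction on \<open>j\<close> since \<open>F\<^sup>-\<^sup>1(Fm) \<subseteq> Fs\<close>;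
  \<open>h\<close> is injective because \<open>F\<close> is. For (2), the two surjections onto the quotients have the same
  kernel: if \<open>\<Sum> F\<^sup>i x\<^sub>i = \<Sum> F\<^sup>i y\<^sub>i\<close> with \<open>y\<^sub>i \<in> Fs\<close>, exactness applied to \<open>x - y\<close> writes every \<open>x\<^sub>i\<close>
  as an element of \<open>Fs + F(Fs)\<close>.
\<close>

section \<open>Evaluation of integer polynomials\<close>

definition monom_eval :: "(nat \<Rightarrow> 'a::comm_ring_1) \<Rightarrow> (nat \<Rightarrow>\<^sub>0 nat) \<Rightarrow> 'a" where
  "monom_eval x mn = (\<Prod>i\<in>Poly_Mapping.keys mn. x i ^ Poly_Mapping.lookup mn i)"

lemma monom_eval_superset:
  assumes "finite T" "Poly_Mapping.keys mn \<subseteq> T"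
  shows "monom_eval x mn = (\<Prod>i\<in>T. x i ^ Poly_Mapping.lookup mn i)"
  unfolding monom_eval_def
  by (rule prod.mono_neutral_left) (use assms in \<open>auto simp: in_keys_iff\<close>)

lemma monom_eval_add: "monom_eval x (a + b) = monom_eval x a * monom_eval x b"
proof -
  let ?T = "Poly_Mapping.keys a \<union> Poly_Mapping.keys b"
  have "monom_eval x (a + b) = (\<Prod>i\<in>?T. x i ^ Poly_Mapping.lookup (a + b) i)"
    by (rule monom_eval_superset) (auto dest: keys_add[THEN subsetD])
  also have "\<dots> = (\<Prod>i\<in>?T. x i ^ Poly_Mapping.lookup a i) * (\<Prod>i\<in>?T. x i ^ Poly_Mapping.lookup b i)"
    by (simp add: lookup_add power_add prod.distrib)
  also have "\<dots> = monom_eval x a * monom_eval x b"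
    by (simp add: monom_eval_superset[of ?T a x] monom_eval_superset[of ?T b x])
  finally show ?thesis .
qed

lemma monom_eval_single: "monom_eval x (Poly_Mapping.single i k) = x i ^ k"
  by (simp add: monom_eval_def)

lemma monom_eval_power: "monom_eval x mn ^ k = monom_eval (\<lambda>i. x i ^ k) mn"
  by (simp add: monom_eval_def prod_power_distrib power_mult[symmetric] mult.commute)

lemma mpoly_eval_superset:
  assumes "finite S" "Poly_Mapping.keys P \<subseteq> S"
  shows "mpoly_eval x P = (\<Sum>mn\<in>S. of_int (Poly_Mapping.lookup P mn) * monom_eval x mn)"
  unfolding mpoly_eval_def monom_eval_def[symmetric]
  by (rule sum.mono_neutral_left) (use assms in \<open>auto simp: in_keys_iff\<close>)

lemma mpoly_eval_add: "mpoly_eval x (P + Q) = mpoly_eval x P + mpoly_eval x Q"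
proof -
  let ?S = "Poly_Mapping.keys P \<union> Poly_Mapping.keys Q"
  have "mpoly_eval x (P + Q) = (\<Sum>mn\<in>?S. of_int (Poly_Mapping.lookup (P + Q) mn) * monom_eval x mn)"
    by (rule mpoly_eval_superset) (auto dest: keys_add[THEN subsetD])
  also have "\<dots> = (\<Sum>mn\<in>?S. of_int (Poly_Mapping.lookup P mn) * monom_eval x mn)
                 + (\<Sum>mn\<in>?S. of_int (Poly_Mapping.lookup Q mn) * monom_eval x mn)"
    by (simp add: lookup_add distrib_right sum.distrib)
  also have "\<dots> = mpoly_eval x P + mpoly_eval x Q"
    by (simp add: mpoly_eval_superset[of ?S P x] mpoly_eval_superset[of ?S Q x])
  finally show ?thesis .
qed

lemma mpoly_eval_zero [simp]: "mpoly_eval x 0 = 0"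
  by (simp add: mpoly_eval_def)

lemma mpoly_eval_uminus: "mpoly_eval x (- P) = - mpoly_eval x P"
  using mpoly_eval_add[of x P "- P"] by (simp add: add_eq_0_iff2)

lemma mpoly_eval_diff: "mpoly_eval x (P - Q) = mpoly_eval x P - mpoly_eval x Q"
  using mpoly_eval_add[of x P "- Q"] by (simp add: mpoly_eval_uminus)

lemma mpoly_eval_single: "mpoly_eval x (Poly_Mapping.single mn c) = of_int c * monom_eval x mn"
  by (simp add: mpoly_eval_def monom_eval_def)

lemma mpoly_eval_mult: "mpoly_eval x (P * Q) = mpoly_eval x P * mpoly_eval x Q"
proof -
  have single_left: "mpoly_eval x (frag_of a * Q) = mpoly_eval x (frag_of a) * mpoly_eval x Q" for a
  proof -
    have "Poly_Mapping.keys Q \<subseteq> UNIV" by simp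
    then show ?thesis
    proof (induction Q rule: frag_induction)
      case (one b)
      then show ?case by (simp add: mult_single mpoly_eval_single monom_eval_add)
    next
      case (diff c d)
      then show ?case by (simp add: right_diff_distrib mpoly_eval_diff)
    qed simp
  qed
  have "Poly_Mapping.keys P \<subseteq> UNIV" by simp
  then show ?thesis
  proof (induction P rule: frag_induction)
    case (diff c d)
    then show ?case by (simp add: left_diff_distrib mpoly_eval_diff)
  qed (simp_all add: single_left)
qed

lemma mpoly_eval_one [simp]: "mpoly_eval x 1 = 1"
  using mpoly_eval_single[of x 0 1] by (simp add: monom_eval_def)

lemma mpoly_eval_of_int [simp]: "mpoly_eval x (of_int c) = of_int c"
proof -
  have "Poly_Mapping.single 0 (of_int c :: int) = (of_int c :: mpoly)"
    by (rule single_of_int)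
  then show ?thesis using mpoly_eval_single[of x 0 c] by (simp add: monom_eval_def)
qed

lemma mpoly_eval_of_nat [simp]: "mpoly_eval x (of_nat c) = of_nat c"
  using mpoly_eval_of_int[of x "int c"] by simp

lemma mpoly_eval_power: "mpoly_eval x (P ^ k) = mpoly_eval x P ^ k"
  by (induction k) (simp_all add: mpoly_eval_mult)

lemma mpoly_eval_sum: "mpoly_eval x (sum f S) = (\<Sum>i\<in>S. mpoly_eval x (f i))"
  by (induction S rule: infinite_finite_induct) (simp_all add: mpoly_eval_add)

lemma mpoly_eval_prod: "mpoly_eval x (prod f S) = (\<Prod>i\<in>S. mpoly_eval x (f i))"
  by (induction S rule: infinite_finite_induct) (simp_all add: mpoly_eval_mult)

lemma mpoly_eval_mvar [simp]: "mpoly_eval x (mvar i) = x i"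
  by (simp add: mvar_def mpoly_eval_single monom_eval_single)

lemmas mpoly_eval_simps = mpoly_eval_add mpoly_eval_diff mpoly_eval_uminus mpoly_eval_mult
  mpoly_eval_power mpoly_eval_sum mpoly_eval_prod

lemma ring_hom_mpoly_eval:
  fixes h :: "'a::comm_ring_1 \<Rightarrow> 'b::comm_ring_1"
  assumes add: "\<And>a b. h (a + b) = h a + h b" and mult: "\<And>a b. h (a * b) = h a * h b"
    and one: "h 1 = 1"
  shows "h (mpoly_eval x P) = mpoly_eval (\<lambda>i. h (x i)) P"
proof -
  have zero: "h 0 = 0" using add[of 0 0] by simp
  have uminus: "h (- a) = - h a" for a using add[of a "- a"] zero by (simp add: add_eq_0_iff2)
  have sum: "h (sum f S) = (\<Sum>i\<in>S. h (f i))" for f and S :: "'c set"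
    by (induction S rule: infinite_finite_induct) (simp_all add: zero add)
  have prod: "h (prod f S) = (\<Prod>i\<in>S. h (f i))" for f and S :: "'c set"
    by (induction S rule: infinite_finite_induct) (simp_all add: one mult)
  have power: "h (a ^ k) = h a ^ k" for a k
    by (induction k) (simp_all add: one mult)
  have of_nat: "h (of_nat k) = of_nat k" for k
    by (induction k) (simp_all add: zero one add)
  have diff: "h (a - b) = h a - h b" for a b
    using add[of a "- b"] uminus[of b] by simp
  have of_int: "h (of_int c) = of_int c" for c
    by (cases c) (simp_all add: of_nat uminus diff one)
  show ?thesis
    unfolding mpoly_eval_def by (simp add: sum prod mult power of_int)
qed

lemma mpoly_eval_mpoly_eval:
  "mpoly_eval x (mpoly_eval s P) = mpoly_eval (\<lambda>i. mpoly_eval x (s i)) P"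
  by (rule ring_hom_mpoly_eval) (simp_all add: mpoly_eval_add mpoly_eval_mult)

lemma mvar_power: "mvar a ^ b = Poly_Mapping.single (Poly_Mapping.single a b) 1"
proof (induction b)
  case (Suc b)
  have "mvar a ^ Suc b = Poly_Mapping.single (Poly_Mapping.single a b) 1 * mvar a"
    by (simp only: power_Suc2 Suc)
  also have "\<dots> = Poly_Mapping.single (Poly_Mapping.single a (Suc b)) 1"
    by (simp add: mvar_def mult_single single_add[symmetric])
  finally show ?case .
qed simp

lemma monom_eval_mvar: "monom_eval mvar mn = Poly_Mapping.single mn (1::int)"
proof (induction mn rule: update_induct)
  case (update f a b)
  have "Poly_Mapping.update a b f = f + Poly_Mapping.single a b"
    using update.hyps(1)
    by (intro poly_mapping_eqI) (auto simp: lookup_update lookup_add lookup_single in_keys_iff when_def)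
  then show ?case by (simp add: monom_eval_add update.IH monom_eval_single mvar_power mult_single)
qed (simp add: monom_eval_def)

lemma mpoly_eval_mvar_self [simp]: "mpoly_eval mvar P = P"
proof -
  have "Poly_Mapping.keys P \<subseteq> UNIV" by simp
  then show ?thesis
    by (induction P rule: frag_induction) (simp_all add: mpoly_eval_single monom_eval_mvar mpoly_eval_diff)
qed

lemma mpoly_cdiv_of_nat_mult: "d > 0 \<Longrightarrow> mpoly_cdiv d (of_nat d * Q) = Q"
proof -
  have "(of_nat d * Q :: mpoly) = Poly_Mapping.map ((*) (int d)) Q"
    by (simp add: mult_map_scale_conv_mult)
  then show "d > 0 \<Longrightarrow> ?thesis"
    by (intro poly_mapping_eqI) (simp add: mpoly_cdiv_def map.rep_eq when_def)
qed

section \<open>Congruences modulo a prime\<close>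

lemma dvd_diff_trans:
  "(q::'a::comm_ring_1) dvd a - b \<Longrightarrow> q dvd b - c \<Longrightarrow> q dvd a - c"
  using dvd_add[of q "a - b" "b - c"] by simp

lemma dvd_diff_swap: "(q::'a::comm_ring_1) dvd a - b \<Longrightarrow> q dvd b - a"
  by (subst minus_diff_eq[symmetric]) (simp only: dvd_minus_iff)

lemma dvd_diff_add:
  "(q::'a::comm_ring_1) dvd a - b \<Longrightarrow> q dvd c - d \<Longrightarrow> q dvd (a + c) - (b + d)"
  using dvd_add[of q "a - b" "c - d"] by (simp add: algebra_simps)

lemma dvd_diff_mult:
  assumes "(q::'a::comm_ring_1) dvd a - b" and "q dvd c - d"
  shows "q dvd a * c - b * d"
proof -
  have "a * c - b * d = a * (c - d) + (a - b) * d" by (simp add: algebra_simps)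
  then show ?thesis using assms by (simp add: dvd_add)
qed

lemma dvd_diff_power: "(q::'a::comm_ring_1) dvd a - b \<Longrightarrow> q dvd a ^ k - b ^ k"
  by (induction k) (simp_all add: dvd_diff_mult)

lemma dvd_diff_sum:
  "(\<And>i. i \<in> S \<Longrightarrow> (q::'a::comm_ring_1) dvd f i - g i) \<Longrightarrow> q dvd sum f S - sum g S"
  by (induction S rule: infinite_finite_induct) (simp_all add: dvd_diff_add)

lemma prime_dvd_add_power_diff:
  fixes a b :: "'a::comm_ring_1"
  assumes "Factorial_Ring.prime p"
  shows "of_nat p dvd (a + b) ^ p - (a ^ p + b ^ p)"
proof -
  let ?t = "\<lambda>k. of_nat (p choose k) * a ^ k * b ^ (p - k)"
  have "p > 1" using assms prime_gt_1_nat by blast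
  then have "(\<Sum>k\<in>{0, p}. ?t k) = b ^ p + a ^ p" by simp
  moreover have "(a + b) ^ p = (\<Sum>k\<in>{..p} - {0, p}. ?t k) + (\<Sum>k\<in>{0, p}. ?t k)"
    unfolding binomial_ring by (rule sum.subset_diff) auto
  ultimately have eq: "(a + b) ^ p - (a ^ p + b ^ p) = (\<Sum>k\<in>{..p} - {0, p}. ?t k)"
    by (simp add: algebra_simps)
  have "of_nat p dvd ?t k" if "k \<in> {..p} - {0, p}" for k
  proof -
    have "p dvd (p choose k)" using that assms by (intro dvd_choose_prime) auto
    then have "(of_nat p :: 'a) dvd of_nat (p choose k)" by (auto elim!: dvdE)
    then show ?thesis by (simp add: mult.assoc)
  qed
  then show ?thesis unfolding eq by (rule dvd_sum)
qed

lemma prime_dvd_sum_power_diff: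
  fixes f :: "'b \<Rightarrow> 'a::comm_ring_1"
  assumes "Factorial_Ring.prime p"
  shows "of_nat p dvd sum f S ^ p - (\<Sum>i\<in>S. f i ^ p)"
proof (induction S rule: infinite_finite_induct)
  case (insert x F)
  have "of_nat p dvd (f x + sum f F) ^ p - (f x ^ p + sum f F ^ p)"
    by (rule prime_dvd_add_power_diff[OF assms])
  moreover have "of_nat p dvd (f x ^ p + sum f F ^ p) - (f x ^ p + (\<Sum>i\<in>F. f i ^ p))"
    using insert.IH by simp
  ultimately show ?case using insert.hyps by (simp add: dvd_diff_trans)
qed (use prime_gt_1_nat[OF assms] in \<open>simp_all add: power_0_left\<close>)

lemma prime_dvd_of_nat_power_diff:
  assumes "Factorial_Ring.prime p"
  shows "(of_nat p :: 'a::comm_ring_1) dvd of_nat k ^ p - of_nat k"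
proof (induction k)
  case 0
  then show ?case using prime_gt_1_nat[OF assms] by (simp add: power_0_left)
next
  case (Suc k)
  have "(of_nat p :: 'a) dvd (of_nat k + 1) ^ p - (of_nat k ^ p + 1 ^ p)"
    by (rule prime_dvd_add_power_diff[OF assms])
  moreover have "(of_nat p :: 'a) dvd (of_nat k ^ p + 1 ^ p) - (of_nat k + 1)"
    using Suc.IH by simp
  ultimately show ?case by (simp add: dvd_diff_trans add.commute)
qed

lemma prime_dvd_of_int_power_diff:
  assumes "Factorial_Ring.prime p"
  shows "(of_nat p :: 'a::comm_ring_1) dvd of_int c ^ p - of_int c"
proof (cases "c \<ge> 0")
  case True
  then obtain k where "c = int k" using nonneg_int_cases by blast
  then show ?thesis using prime_dvd_of_nat_power_diff[OF assms, of k] by simp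
next
  case False
  then obtain k where c: "c = - int k" by (intro that[of "nat (- c)"]) simp
  have "(of_nat p :: 'a) dvd (of_nat k + - of_nat k) ^ p - (of_nat k ^ p + (- of_nat k) ^ p)"
    by (rule prime_dvd_add_power_diff[OF assms])
  then have "(of_nat p :: 'a) dvd - (of_nat k ^ p) - (- of_nat k) ^ p"
    using prime_gt_1_nat[OF assms] by (simp add: power_0_left)
  then have "(of_nat p :: 'a) dvd (- of_nat k) ^ p - (- (of_nat k ^ p))"
    by (rule dvd_diff_swap)
  moreover have "(of_nat p :: 'a) dvd - (of_nat k ^ p) - (- of_nat k)"
    using dvd_diff_swap[OF prime_dvd_of_nat_power_diff[OF assms, of k]] by simp
  ultimately have "(of_nat p :: 'a) dvd (- of_nat k) ^ p - (- of_nat k)"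
    by (rule dvd_diff_trans)
  then show ?thesis using c by simp
qed

text \<open>Frobenius is additive modulo \<open>p\<close> and fixes the integers, hence it commutes with evaluation.\<close>

lemma prime_dvd_mpoly_eval_power_diff:
  assumes "Factorial_Ring.prime p"
  shows "(of_nat p :: 'a::comm_ring_1) dvd mpoly_eval x f ^ p - mpoly_eval (\<lambda>i. x i ^ p) f"
proof -
  let ?t = "\<lambda>mn. of_int (Poly_Mapping.lookup f mn) * monom_eval x mn :: 'a"
  have "(of_nat p :: 'a) dvd mpoly_eval x f ^ p - (\<Sum>mn\<in>Poly_Mapping.keys f. ?t mn ^ p)"
    unfolding mpoly_eval_def monom_eval_def[symmetric] by (rule prime_dvd_sum_power_diff[OF assms])
  moreover have "(of_nat p :: 'a) dvd (\<Sum>mn\<in>Poly_Mapping.keys f. ?t mn ^ p) - mpoly_eval (\<lambda>i. x i ^ p) f"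
    unfolding mpoly_eval_def monom_eval_def[symmetric]
  proof (rule dvd_diff_sum)
    fix mn
    show "(of_nat p :: 'a) dvd ?t mn ^ p - of_int (Poly_Mapping.lookup f mn) * monom_eval (\<lambda>i. x i ^ p) mn"
      unfolding power_mult_distrib monom_eval_power
      by (rule dvd_diff_mult[OF prime_dvd_of_int_power_diff[OF assms]]) simp
  qed
  ultimately show ?thesis by (rule dvd_diff_trans)
qed

lemma prime_power_dvd_power_diff:
  fixes a b :: "'a::comm_ring_1"
  assumes "Factorial_Ring.prime p" and "of_nat p ^ Suc j dvd a - b"
  shows "of_nat p ^ Suc (Suc j) dvd a ^ p - b ^ p"
proof -
  have "(of_nat p :: 'a) dvd a - b"
    using assms(2) by (meson dvd_power dvd_trans zero_less_Suc)
  then have "(of_nat p :: 'a) dvd (\<Sum>i<p. b ^ (p - Suc i) * a ^ i) - (\<Sum>i<p. b ^ (p - Suc i) * b ^ i)"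
    by (intro dvd_diff_sum dvd_diff_mult dvd_diff_power) auto
  moreover have "(\<Sum>i<p. b ^ (p - Suc i) * b ^ i) = of_nat p * b ^ (p - 1)"
  proof -
    have "(\<Sum>i<p. b ^ (p - Suc i) * b ^ i) = (\<Sum>i<p. b ^ (p - 1))"
      by (rule sum.cong) (auto simp: power_add[symmetric])
    then show ?thesis by simp
  qed
  ultimately have "(of_nat p :: 'a) dvd (\<Sum>i<p. b ^ (p - Suc i) * a ^ i)"
    using dvd_add[OF _ dvd_triv_left[of "of_nat p" "b ^ (p - 1)"]] by fastforce
  from mult_dvd_mono[OF assms(2) this] show ?thesis
    unfolding power_diff_sumr2 by (simp add: mult.commute)
qed

lemma prime_power_dvd_power_power_diff:
  fixes a b :: "'a::comm_ring_1"
  assumes "Factorial_Ring.prime p" and "of_nat p dvd a - b"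
  shows "of_nat p ^ Suc j dvd a ^ (p ^ j) - b ^ (p ^ j)"
proof (induction j)
  case (Suc j)
  then have "of_nat p ^ Suc (Suc j) dvd (a ^ (p ^ j)) ^ p - (b ^ (p ^ j)) ^ p"
    by (rule prime_power_dvd_power_diff[OF assms(1)])
  then show ?case by (simp add: power_mult[symmetric] mult.commute)
qed (use assms in simp)

section \<open>Witt vector addition\<close>

lemma length_witt_add_polys: "length (witt_add_polys p k) = k"
  by (induction k) (simp_all add: Let_def)

lemma nth_witt_add_polys: "i < k \<Longrightarrow> witt_add_polys p k ! i = witt_add_poly p i"
proof (induction k)
  case (Suc k)
  show ?case
  proof (cases "i < k")
    case True
    then show ?thesis using Suc by (simp add: Let_def nth_append length_witt_add_polys)
  next
    case False
    then have "i = k" using Suc.prems by simp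
    then show ?thesis by (simp add: witt_add_poly_def)
  qed
qed simp

definition ghost_comp :: "nat \<Rightarrow> (nat \<Rightarrow> 'a::comm_ring_1) \<Rightarrow> nat \<Rightarrow> 'a" where
  "ghost_comp p a k = (\<Sum>i\<le>k. of_nat (p ^ i) * a i ^ (p ^ (k - i)))"

lemma ghost_poly_eq_ghost_comp: "ghost_poly p Z k = ghost_comp p Z k"
  by (simp add: ghost_poly_def ghost_comp_def)

lemma ghost_comp_lessThan:
  "ghost_comp p a k = (\<Sum>i<k. of_nat (p ^ i) * a i ^ (p ^ (k - i))) + of_nat (p ^ k) * a k"
  by (simp add: ghost_comp_def lessThan_Suc_atMost[symmetric])

lemma ghost_comp_Suc:
  "ghost_comp p a (Suc k) = ghost_comp p (\<lambda>i. a i ^ p) k + of_nat (p ^ Suc k) * a (Suc k)"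
proof -
  have "(\<Sum>i\<le>k. of_nat (p ^ i) * a i ^ (p ^ (Suc k - i))) = ghost_comp p (\<lambda>i. a i ^ p) k"
    unfolding ghost_comp_def
    by (rule sum.cong) (auto simp: Suc_diff_le power_mult[symmetric] mult.commute)
  then show ?thesis by (simp add: ghost_comp_def)
qed

lemma ghost_comp_cong: "(\<And>i. i \<le> k \<Longrightarrow> a i = b i) \<Longrightarrow> ghost_comp p a k = ghost_comp p b k"
  by (simp add: ghost_comp_def)

lemma ghost_comp_zero: "p > 0 \<Longrightarrow> ghost_comp p (\<lambda>_. 0) k = 0"
  by (simp add: ghost_comp_def power_0_left)

lemma mpoly_eval_ghost_comp:
  "mpoly_eval x (ghost_comp p Z k) = ghost_comp p (\<lambda>i. mpoly_eval x (Z i)) k"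
  by (simp add: ghost_comp_def mpoly_eval_simps)

lemma witt_add_poly_rec:
  "witt_add_poly p k = mpoly_cdiv (p ^ k) (ghost_comp p wX k + ghost_comp p wY k
     - (\<Sum>i<k. of_nat (p ^ i) * witt_add_poly p i ^ (p ^ (k - i))))"
  by (simp add: witt_add_poly_def Let_def nth_append length_witt_add_polys nth_witt_add_polys
      ghost_poly_eq_ghost_comp)

lemma ghost_comp_eq_imp_eq:
  assumes "p > 0" and "\<And>k. k < N \<Longrightarrow> ghost_comp p u k = ghost_comp p (w :: nat \<Rightarrow> mpoly) k"
  shows "k < N \<Longrightarrow> u k = w k"
proof (induction k rule: less_induct)
  case (less k)
  have "(\<Sum>i<k. of_nat (p ^ i) * u i ^ (p ^ (k - i))) = (\<Sum>i<k. of_nat (p ^ i) * w i ^ (p ^ (k - i)) :: mpoly)"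
    using less by (intro sum.cong) auto
  then have "(of_nat (p ^ k) :: mpoly) * u k = of_nat (p ^ k) * w k"
    using assms(2)[OF less.prems] by (simp add: ghost_comp_lessThan)
  then show ?case using assms(1) by simp
qed

text \<open>Dwork's lemma in the form needed for the integrality of the Witt polynomials: the
  Frobenius substitution \<open>\<phi>\<close> satisfies \<open>\<phi>(Q) \<equiv> Q\<^sup>p\<close> mod \<open>p\<close>, and this congruence lifts through \<open>p\<close>-th powers.\<close>

lemma prime_power_dvd_frobenius_diff:
  assumes "Factorial_Ring.prime p" and "i \<le> j"
  shows "(of_nat (p ^ Suc j) :: mpoly)
           dvd of_nat (p ^ i) * (mpoly_eval (\<lambda>v. mvar v ^ p) Q ^ (p ^ (j - i)) - Q ^ (p ^ (Suc j - i)))"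
proof -
  have "(of_nat p :: mpoly) dvd mpoly_eval (\<lambda>v. mvar v ^ p) Q - Q ^ p"
    using dvd_diff_swap[OF prime_dvd_mpoly_eval_power_diff[OF assms(1), of mvar Q]] by simp
  then have "(of_nat p :: mpoly) ^ Suc (j - i)
               dvd mpoly_eval (\<lambda>v. mvar v ^ p) Q ^ (p ^ (j - i)) - (Q ^ p) ^ (p ^ (j - i))"
    by (rule prime_power_dvd_power_power_diff[OF assms(1)])
  moreover have "(Q ^ p) ^ (p ^ (j - i)) = Q ^ (p ^ (Suc j - i))"
    using assms(2) by (simp add: power_mult[symmetric] Suc_diff_le mult.commute)
  ultimately have dvd: "(of_nat p :: mpoly) ^ Suc (j - i)
               dvd mpoly_eval (\<lambda>v. mvar v ^ p) Q ^ (p ^ (j - i)) - Q ^ (p ^ (Suc j - i))"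
    by simp
  have "(of_nat (p ^ Suc j) :: mpoly) = of_nat p ^ i * of_nat p ^ Suc (j - i)"
    using assms(2) by (simp add: power_add[symmetric])
  moreover have "(of_nat (p ^ i) :: mpoly) = of_nat p ^ i" by simp
  ultimately show ?thesis by (simp only:) (rule mult_dvd_mono[OF dvd_refl dvd])
qed

lemma witt_add_poly_numerator_dvd:
  assumes "Factorial_Ring.prime p"
    and IH: "ghost_comp p (witt_add_poly p) j = ghost_comp p wX j + ghost_comp p wY j"
  shows "(of_nat (p ^ Suc j) :: mpoly) dvd ghost_comp p wX (Suc j) + ghost_comp p wY (Suc j)
           - (\<Sum>i<Suc j. of_nat (p ^ i) * witt_add_poly p i ^ (p ^ (Suc j - i)))"
proof -
  let ?\<phi> = "mpoly_eval (\<lambda>v. mvar v ^ p)"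
  let ?d = "\<lambda>i. of_nat (p ^ i) * (?\<phi> (witt_add_poly p i) ^ (p ^ (j - i))
                                 - witt_add_poly p i ^ (p ^ (Suc j - i)))"
  have "?\<phi> (ghost_comp p (witt_add_poly p) j) = ?\<phi> (ghost_comp p wX j + ghost_comp p wY j)"
    using IH by simp
  then have "ghost_comp p (\<lambda>i. ?\<phi> (witt_add_poly p i)) j
               = ghost_comp p (\<lambda>i. wX i ^ p) j + ghost_comp p (\<lambda>i. wY i ^ p) j"
    by (simp add: mpoly_eval_ghost_comp mpoly_eval_add wX_def wY_def)
  then have "ghost_comp p wX (Suc j) + ghost_comp p wY (Suc j)
               - (\<Sum>i<Suc j. of_nat (p ^ i) * witt_add_poly p i ^ (p ^ (Suc j - i)))
             = of_nat (p ^ Suc j) * (wX (Suc j) + wY (Suc j)) + (\<Sum>i\<le>j. ?d i)"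
    unfolding ghost_comp_Suc lessThan_Suc_atMost
    by (simp add: ghost_comp_def algebra_simps sum_subtractf sum.distrib)
  moreover have "(of_nat (p ^ Suc j) :: mpoly) dvd (\<Sum>i\<le>j. ?d i)"
    by (intro dvd_sum prime_power_dvd_frobenius_diff[OF assms(1)]) simp
  ultimately show ?thesis by (simp add: dvd_add)
qed

theorem ghost_comp_witt_add_poly:
  assumes "Factorial_Ring.prime p"
  shows "ghost_comp p (witt_add_poly p) k = ghost_comp p wX k + ghost_comp p wY k"
proof (induction k rule: less_induct)
  case (less k)
  define D where "D = ghost_comp p wX k + ghost_comp p wY k
                        - (\<Sum>i<k. of_nat (p ^ i) * witt_add_poly p i ^ (p ^ (k - i)))"
  have "(of_nat (p ^ k) :: mpoly) dvd D"
  proof (cases k)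
    case (Suc j)
    then have "ghost_comp p (witt_add_poly p) j = ghost_comp p wX j + ghost_comp p wY j"
      using less by simp
    from witt_add_poly_numerator_dvd[OF assms this] show ?thesis unfolding D_def Suc .
  qed simp
  then obtain Q where Q: "D = of_nat (p ^ k) * Q" by (elim dvdE)
  have "witt_add_poly p k = mpoly_cdiv (p ^ k) D"
    unfolding D_def by (rule witt_add_poly_rec)
  also have "\<dots> = Q"
    unfolding Q using prime_gt_0_nat[OF assms] by (intro mpoly_cdiv_of_nat_mult) simp
  finally have "of_nat (p ^ k) * witt_add_poly p k = D"
    using Q by simp
  then show ?case by (simp add: D_def ghost_comp_lessThan algebra_simps)
qed

definition interleave :: "(nat \<Rightarrow> 'a) \<Rightarrow> (nat \<Rightarrow> 'a) \<Rightarrow> nat \<Rightarrow> 'a" where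
  "interleave a b v = (if even v then a (v div 2) else b (v div 2))"

lemma mpoly_eval_interleave_wX [simp]: "mpoly_eval (interleave a b) (wX i) = a i"
  and mpoly_eval_interleave_wY [simp]: "mpoly_eval (interleave a b) (wY i) = b i"
  by (simp_all add: interleave_def wX_def wY_def)

text \<open>Witt vector addition without truncation; it is computed by the universal polynomials
  \<open>witt_add_poly\<close>, so identities between them are proved on the generic vectors \<open>wX\<close>, \<open>wY\<close>
  over \<open>\<int>\<close>, where ghost components are injective, and then specialised.\<close>

definition witt_sum :: "nat \<Rightarrow> (nat \<Rightarrow> 'a::comm_ring_1) \<Rightarrow> (nat \<Rightarrow> 'a) \<Rightarrow> nat \<Rightarrow> 'a" where
  "witt_sum p a b k = mpoly_eval (interleave a b) (witt_add_poly p k)"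

lemma ghost_comp_witt_sum:
  assumes "Factorial_Ring.prime p"
  shows "ghost_comp p (witt_sum p a b) k = ghost_comp p a k + ghost_comp p b k"
  using arg_cong[OF ghost_comp_witt_add_poly[OF assms], of "mpoly_eval (interleave a b)"]
  by (simp add: mpoly_eval_ghost_comp mpoly_eval_add witt_sum_def[abs_def])

lemma mpoly_eval_witt_sum:
  "mpoly_eval x (witt_sum p A B k) = witt_sum p (\<lambda>i. mpoly_eval x (A i)) (\<lambda>i. mpoly_eval x (B i)) k"
proof -
  have "(\<lambda>v. mpoly_eval x (interleave A B v))
          = interleave (\<lambda>i. mpoly_eval x (A i)) (\<lambda>i. mpoly_eval x (B i))"
    by (simp add: interleave_def fun_eq_iff)
  then show ?thesis by (simp add: witt_sum_def mpoly_eval_mpoly_eval)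
qed

lemma witt_sum_commute:
  assumes "Factorial_Ring.prime p"
  shows "witt_sum p a b = witt_sum p b a"
proof
  fix k
  have "witt_sum p wX wY k = witt_sum p wY wX k"
    by (rule ghost_comp_eq_imp_eq[OF prime_gt_0_nat[OF assms], of "Suc k"])
      (simp_all add: ghost_comp_witt_sum[OF assms] add.commute)
  from arg_cong[OF this, of "mpoly_eval (interleave a b)"]
  show "witt_sum p a b k = witt_sum p b a k"
    by (simp add: mpoly_eval_witt_sum)
qed

lemma witt_sum_assoc:
  assumes "Factorial_Ring.prime p"
  shows "witt_sum p (witt_sum p a b) c = witt_sum p a (witt_sum p b c)"
proof
  fix k
  define X1 X2 X3 where "X1 i = mvar (3 * i)" and "X2 i = mvar (3 * i + 1)" and "X3 i = mvar (3 * i + 2)"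
    for i
  define x where "x v = (if v mod 3 = 0 then a (v div 3) else if v mod 3 = 1 then b (v div 3)
                         else c (v div 3))" for v
  have generic: "witt_sum p (witt_sum p X1 X2) X3 k = witt_sum p X1 (witt_sum p X2 X3) k"
    by (rule ghost_comp_eq_imp_eq[OF prime_gt_0_nat[OF assms], of "Suc k"])
      (simp_all add: ghost_comp_witt_sum[OF assms] add.assoc)
  have "Suc (3 * i) div 3 = i" "Suc (Suc (3 * i)) div 3 = i"
    "Suc (3 * i) mod 3 = 1" "Suc (Suc (3 * i)) mod 3 = 2" for i :: nat
    by presburger+
  then have specialise: "(\<lambda>i. mpoly_eval x (X1 i)) = a" "(\<lambda>i. mpoly_eval x (X2 i)) = b"
    "(\<lambda>i. mpoly_eval x (X3 i)) = c"
    by (simp_all add: X1_def X2_def X3_def x_def)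
  from arg_cong[OF generic, of "mpoly_eval x"]
  show "witt_sum p (witt_sum p a b) c k = witt_sum p a (witt_sum p b c) k"
    by (simp add: mpoly_eval_witt_sum specialise)
qed

lemma witt_sum_zero_right:
  assumes "Factorial_Ring.prime p"
  shows "witt_sum p a (\<lambda>_. 0) = a"
proof
  fix k
  have p0: "p > 0" using prime_gt_0_nat[OF assms] .
  have "witt_sum p mvar (\<lambda>_. 0) k = mvar k"
    by (rule ghost_comp_eq_imp_eq[OF p0, of "Suc k"])
      (simp_all add: ghost_comp_witt_sum[OF assms] ghost_comp_zero[OF p0])
  from arg_cong[OF this, of "mpoly_eval a"] show "witt_sum p a (\<lambda>_. 0) k = a k"
    by (simp add: mpoly_eval_witt_sum)
qed

definition witt_trunc :: "nat \<Rightarrow> (nat \<Rightarrow> 'a::zero) \<Rightarrow> nat \<Rightarrow> 'a" where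
  "witt_trunc N a i = (if i < N then a i else 0)"

lemma witt_trunc_apply [simp]:
  "k < N \<Longrightarrow> witt_trunc N a k = a k" "\<not> k < N \<Longrightarrow> witt_trunc N a k = 0"
  by (simp_all add: witt_trunc_def)

lemma mpoly_eval_witt_trunc [simp]:
  "(\<lambda>i. mpoly_eval x (witt_trunc N A i)) = witt_trunc N (\<lambda>i. mpoly_eval x (A i))"
  by (simp add: witt_trunc_def fun_eq_iff)

lemma witt_sum_trunc:
  assumes "Factorial_Ring.prime p" and "k < N"
  shows "witt_sum p (witt_trunc N a) (witt_trunc N b) k = witt_sum p a b k"
proof -
  have ghost_trunc: "ghost_comp p (witt_trunc N U) j = ghost_comp p U j" if "j < N"
    for U :: "nat \<Rightarrow> mpoly" and j
    using that by (intro ghost_comp_cong) simp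
  have "witt_sum p (witt_trunc N wX) (witt_trunc N wY) k = witt_sum p wX wY k"
    by (rule ghost_comp_eq_imp_eq[OF prime_gt_0_nat[OF assms(1)], of N])
      (simp_all add: ghost_comp_witt_sum[OF assms(1)] ghost_trunc assms(2))
  from arg_cong[OF this, of "mpoly_eval (interleave a b)"] show ?thesis
    by (simp add: mpoly_eval_witt_sum)
qed

lemma witt_sum_last:
  assumes "Factorial_Ring.prime p"
  shows "witt_sum p a b k = a k + b k + witt_sum p (witt_trunc k a) (witt_trunc k b) k"
proof -
  have p0: "p > 0" using prime_gt_0_nat[OF assms] .
  define \<Sigma> where "\<Sigma> = (\<Sum>i<k. of_nat (p ^ i) * witt_sum p wX wY i ^ (p ^ (k - i)) :: mpoly)"
  have ghost_trunc: "ghost_comp p (witt_trunc k U) k = ghost_comp p U k - of_nat (p ^ k) * U k"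
    for U :: "nat \<Rightarrow> mpoly"
  proof -
    have "(\<Sum>i<k. of_nat (p ^ i) * witt_trunc k U i ^ (p ^ (k - i)))
            = (\<Sum>i<k. of_nat (p ^ i) * U i ^ (p ^ (k - i)) :: mpoly)"
      by (intro sum.cong) auto
    then show ?thesis by (simp add: ghost_comp_lessThan)
  qed
  have "\<Sigma> + of_nat (p ^ k) * witt_sum p (witt_trunc k wX) (witt_trunc k wY) k
          = ghost_comp p (witt_sum p (witt_trunc k wX) (witt_trunc k wY)) k"
    unfolding ghost_comp_lessThan \<Sigma>_def by (simp add: witt_sum_trunc[OF assms])
  also have "\<dots> = ghost_comp p wX k + ghost_comp p wY k - of_nat (p ^ k) * (wX k + wY k)"
    by (simp add: ghost_comp_witt_sum[OF assms] ghost_trunc algebra_simps)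
  also have "ghost_comp p wX k + ghost_comp p wY k = \<Sigma> + of_nat (p ^ k) * witt_sum p wX wY k"
    unfolding ghost_comp_witt_sum[OF assms, symmetric] \<Sigma>_def by (rule ghost_comp_lessThan)
  finally have "(of_nat (p ^ k) :: mpoly) * witt_sum p wX wY k
      = of_nat (p ^ k) * (wX k + wY k + witt_sum p (witt_trunc k wX) (witt_trunc k wY) k)"
    by (simp add: algebra_simps)
  then have "witt_sum p wX wY k = wX k + wY k + witt_sum p (witt_trunc k wX) (witt_trunc k wY) k"
    using p0 by simp
  from arg_cong[OF this, of "mpoly_eval (interleave a b)"] show ?thesis
    by (simp add: mpoly_eval_witt_sum mpoly_eval_add)
qed

lemma witt_sum_power_char:
  assumes "Factorial_Ring.prime p" and "of_nat p = (0::'a::comm_ring_1)"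
  shows "witt_sum p a b k ^ p = witt_sum p (\<lambda>i. a i ^ p) (\<lambda>i. (b i :: 'a) ^ p) k"
proof -
  have "(of_nat p :: 'a) dvd mpoly_eval (interleave a b) (witt_add_poly p k) ^ p
          - mpoly_eval (\<lambda>v. interleave a b v ^ p) (witt_add_poly p k)"
    by (rule prime_dvd_mpoly_eval_power_diff[OF assms(1)])
  moreover have "(\<lambda>v. interleave a b v ^ p) = interleave (\<lambda>i. a i ^ p) (\<lambda>i. b i ^ p)"
    by (auto simp: interleave_def)
  ultimately show ?thesis using assms(2) by (simp add: witt_sum_def)
qed

lemma witt_add_eq_witt_trunc: "witt_add p n a b = witt_trunc n (witt_sum p a b)"
  by (simp add: witt_add_def witt_trunc_def witt_sum_def interleave_def[abs_def] fun_eq_iff)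

lemma witt_sum_trunc_left:
  assumes "Factorial_Ring.prime p" and "k < n" and "\<forall>i\<ge>n. c i = 0"
  shows "witt_sum p (witt_trunc n a) c k = witt_sum p a c k"
proof -
  have "witt_trunc n c = c" using assms(3) by (auto simp: witt_trunc_def)
  then show ?thesis
    using witt_sum_trunc[OF assms(1,2), of "witt_trunc n a" c] witt_sum_trunc[OF assms(1,2), of a c]
    by simp
qed

text \<open>The additive inverse, component by component, obtained by solving \<open>witt_sum_last\<close> for the
  \<open>k\<close>-th component of \<open>- a\<close>.\<close>

fun witt_neg_list :: "nat \<Rightarrow> (nat \<Rightarrow> 'a::comm_ring_1) \<Rightarrow> nat \<Rightarrow> 'a list" where
  "witt_neg_list p a 0 = []"
| "witt_neg_list p a (Suc k) = (let L = witt_neg_list p a k in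
     L @ [- a k - witt_sum p (witt_trunc k a) (\<lambda>i. if i < k then L ! i else 0) k])"

definition witt_neg :: "nat \<Rightarrow> (nat \<Rightarrow> 'a::comm_ring_1) \<Rightarrow> nat \<Rightarrow> 'a" where
  "witt_neg p a i = witt_neg_list p a (Suc i) ! i"

lemma length_witt_neg_list: "length (witt_neg_list p a k) = k"
  by (induction k) (simp_all add: Let_def)

lemma nth_witt_neg_list: "i < k \<Longrightarrow> witt_neg_list p a k ! i = witt_neg p a i"
proof (induction k)
  case (Suc k)
  show ?case
  proof (cases "i < k")
    case True
    then show ?thesis using Suc by (simp add: Let_def nth_append length_witt_neg_list)
  next
    case False
    then have "i = k" using Suc.prems by simp
    then show ?thesis by (simp add: witt_neg_def)
  qed
qed simp

lemma witt_neg_rec: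
  "witt_neg p a k = - a k - witt_sum p (witt_trunc k a) (witt_trunc k (witt_neg p a)) k"
proof -
  have "(\<lambda>i. if i < k then witt_neg_list p a k ! i else 0) = witt_trunc k (witt_neg p a)"
    by (auto simp: witt_trunc_def nth_witt_neg_list)
  then show ?thesis by (simp add: witt_neg_def Let_def nth_append length_witt_neg_list)
qed

lemma witt_sum_neg:
  assumes "Factorial_Ring.prime p"
  shows "witt_sum p a (witt_neg p a) = (\<lambda>_. 0)"
  using witt_sum_last[OF assms, of a "witt_neg p a"] witt_neg_rec[of p a] by (simp add: fun_eq_iff)

lemma carrier_WittGroup: "carrier (WittGroup p n) = {a. \<forall>i\<ge>n. a i = 0}"
  and mult_WittGroup: "x \<otimes>\<^bsub>WittGroup p n\<^esub> y = witt_add p n x y"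
  and one_WittGroup: "\<one>\<^bsub>WittGroup p n\<^esub> = (\<lambda>_. 0)"
  by (simp_all add: WittGroup_def)

lemmas WittGroup_simps = carrier_WittGroup mult_WittGroup one_WittGroup

lemma witt_add_assoc:
  assumes "Factorial_Ring.prime p" and "\<forall>i\<ge>n. a i = 0" and "\<forall>i\<ge>n. c i = 0"
  shows "witt_add p n (witt_add p n a b) c = witt_add p n a (witt_add p n b c)"
proof
  fix k
  show "witt_add p n (witt_add p n a b) c k = witt_add p n a (witt_add p n b c) k"
  proof (cases "k < n")
    case True
    have "witt_add p n (witt_add p n a b) c k = witt_sum p (witt_trunc n (witt_sum p a b)) c k"
      using True by (simp add: witt_add_eq_witt_trunc)
    also have "\<dots> = witt_sum p (witt_sum p a b) c k"
      by (rule witt_sum_trunc_left[OF assms(1) True assms(3)])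
    also have "\<dots> = witt_sum p (witt_sum p b c) a k"
      by (simp add: witt_sum_assoc[OF assms(1)] witt_sum_commute[OF assms(1), of a])
    also have "\<dots> = witt_sum p (witt_trunc n (witt_sum p b c)) a k"
      by (rule witt_sum_trunc_left[OF assms(1) True assms(2), symmetric])
    also have "\<dots> = witt_add p n a (witt_add p n b c) k"
      using True by (simp add: witt_add_eq_witt_trunc witt_sum_commute[OF assms(1), of _ a])
    finally show ?thesis .
  qed (simp add: witt_add_def)
qed

lemma witt_add_neg_left:
  assumes "Factorial_Ring.prime p" and "\<forall>i\<ge>n. a i = 0"
  shows "witt_add p n (witt_trunc n (witt_neg p a)) a = (\<lambda>_. 0)"
proof
  fix k
  show "witt_add p n (witt_trunc n (witt_neg p a)) a k = 0"
  proof (cases "k < n")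
    case True
    then have "witt_add p n (witt_trunc n (witt_neg p a)) a k = witt_sum p (witt_neg p a) a k"
      using assms(2) by (simp add: witt_add_eq_witt_trunc witt_sum_trunc_left[OF assms(1) True])
    also have "\<dots> = 0" by (simp add: witt_sum_commute[OF assms(1)] witt_sum_neg[OF assms(1)])
    finally show ?thesis .
  qed (simp add: witt_add_def)
qed

theorem comm_group_WittGroup:
  assumes "Factorial_Ring.prime p"
  shows "comm_group (WittGroup p n :: (nat \<Rightarrow> 'a::comm_ring_1) monoid)"
proof (rule comm_groupI, simp_all only: WittGroup_simps)
  fix x y z :: "nat \<Rightarrow> 'a"
  assume "x \<in> {a. \<forall>i\<ge>n. a i = 0}" "z \<in> {a. \<forall>i\<ge>n. a i = 0}"
  then show "witt_add p n (witt_add p n x y) z = witt_add p n x (witt_add p n y z)"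
    by (simp add: witt_add_assoc[OF assms])
next
  fix x y :: "nat \<Rightarrow> 'a"
  show "witt_add p n x y = witt_add p n y x"
    by (simp add: witt_add_eq_witt_trunc witt_sum_commute[OF assms])
next
  fix x :: "nat \<Rightarrow> 'a"
  assume "x \<in> {a. \<forall>i\<ge>n. a i = 0}"
  then show "witt_add p n (\<lambda>_. 0) x = x"
    by (auto simp: witt_add_eq_witt_trunc witt_sum_commute[OF assms] witt_sum_zero_right[OF assms]
        witt_trunc_def)
next
  fix x :: "nat \<Rightarrow> 'a"
  assume "x \<in> {a. \<forall>i\<ge>n. a i = 0}"
  then show "\<exists>y\<in>{a. \<forall>i\<ge>n. a i = 0}. witt_add p n y x = (\<lambda>_. 0)"
    using witt_add_neg_left[OF assms] by (intro bexI[of _ "witt_trunc n (witt_neg p x)"]) simp_all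
qed (simp_all add: witt_add_def)

lemma inv_WittGroup:
  assumes "Factorial_Ring.prime p" and "a \<in> carrier (WittGroup p n)"
  shows "inv\<^bsub>WittGroup p n\<^esub> a = witt_trunc n (witt_neg p (a :: nat \<Rightarrow> 'a::comm_ring_1))"
proof -
  interpret comm_group "WittGroup p n :: (nat \<Rightarrow> 'a) monoid"
    by (rule comm_group_WittGroup[OF assms(1)])
  show ?thesis
    using assms witt_add_neg_left[OF assms(1)]
    by (intro inv_equality) (simp_all add: WittGroup_simps witt_trunc_def)
qed

section \<open>Weights and valuations\<close>

text \<open>Giving the variables \<open>X\<^sub>i\<close>, \<open>Y\<^sub>i\<close> (numbers \<open>2i\<close>, \<open>2i+1\<close>) weight \<open>p\<^sup>i\<close>, the \<open>k\<close>-th Witt addition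
  polynomial has weight at most \<open>p\<^sup>k\<close>; this is what makes the filtrations subgroups.\<close>

definition monom_weight :: "nat \<Rightarrow> (nat \<Rightarrow>\<^sub>0 nat) \<Rightarrow> nat" where
  "monom_weight p mn = (\<Sum>v\<in>Poly_Mapping.keys mn. Poly_Mapping.lookup mn v * p ^ (v div 2))"

lemma monom_weight_add: "monom_weight p (a + b) = monom_weight p a + monom_weight p b"
proof -
  let ?T = "Poly_Mapping.keys a \<union> Poly_Mapping.keys b"
  have superset: "monom_weight p mn = (\<Sum>v\<in>?T. Poly_Mapping.lookup mn v * p ^ (v div 2))"
    if "Poly_Mapping.keys mn \<subseteq> ?T" for mn
    unfolding monom_weight_def using that by (intro sum.mono_neutral_left) (auto simp: in_keys_iff)
  have "monom_weight p (a + b) = (\<Sum>v\<in>?T. Poly_Mapping.lookup (a + b) v * p ^ (v div 2))"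
    by (rule superset) (auto dest: keys_add[THEN subsetD])
  also have "\<dots> = monom_weight p a + monom_weight p b"
    by (simp add: lookup_add distrib_right sum.distrib superset)
  finally show ?thesis .
qed

lemma monom_weight_zero [simp]: "monom_weight p 0 = 0"
  by (simp add: monom_weight_def)

definition weight_le :: "nat \<Rightarrow> nat \<Rightarrow> mpoly \<Rightarrow> bool" where
  "weight_le p W P \<longleftrightarrow> (\<forall>mn\<in>Poly_Mapping.keys P. monom_weight p mn \<le> W)"

lemma weight_le_add: "weight_le p W P \<Longrightarrow> weight_le p W Q \<Longrightarrow> weight_le p W (P + Q)"
  unfolding weight_le_def using keys_add[of P Q] by auto

lemma weight_le_diff: "weight_le p W P \<Longrightarrow> weight_le p W Q \<Longrightarrow> weight_le p W (P - Q)"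
  unfolding weight_le_def using keys_diff[of P Q] by auto

lemma weight_le_mult:
  assumes "weight_le p W1 P" and "weight_le p W2 Q"
  shows "weight_le p (W1 + W2) (P * Q)"
  unfolding weight_le_def
proof
  fix mn assume "mn \<in> Poly_Mapping.keys (P * Q)"
  then obtain a b where "mn = a + b" "a \<in> Poly_Mapping.keys P" "b \<in> Poly_Mapping.keys Q"
    using keys_mult[of P Q] by blast
  then show "monom_weight p mn \<le> W1 + W2"
    using assms by (auto simp: weight_le_def monom_weight_add intro!: add_mono)
qed

lemma weight_le_power: "weight_le p W P \<Longrightarrow> weight_le p (e * W) (P ^ e)"
proof (induction e)
  case 0
  then show ?case by (simp add: weight_le_def)
next
  case (Suc e)
  then show ?case using weight_le_mult[OF Suc.prems Suc.IH[OF Suc.prems]] by simp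
qed

lemma weight_le_of_nat_mult: "weight_le p W Q \<Longrightarrow> weight_le p W (of_nat c * Q)"
proof -
  have "weight_le p 0 (of_nat c)"
    unfolding weight_le_def by (auto simp: in_keys_iff lookup_of_nat when_def split: if_splits)
  then show "weight_le p W Q \<Longrightarrow> ?thesis" using weight_le_mult by fastforce
qed

lemma weight_le_sum: "(\<And>i. i \<in> I \<Longrightarrow> weight_le p W (f i)) \<Longrightarrow> weight_le p W (sum f I)"
  unfolding weight_le_def using keys_sum[of f I] by auto

lemma weight_le_mpoly_cdiv: "weight_le p W P \<Longrightarrow> weight_le p W (mpoly_cdiv d P)"
  unfolding weight_le_def mpoly_cdiv_def by (auto simp: in_keys_iff map.rep_eq when_def)

lemma weight_le_mvar: "weight_le p (p ^ (v div 2)) (mvar v)"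
  by (simp add: weight_le_def mvar_def monom_weight_def)

lemma weight_le_power_sum:
  assumes "\<And>i. i \<in> I \<Longrightarrow> i \<le> k \<and> weight_le p (p ^ i) (Z i)"
  shows "weight_le p (p ^ k) (\<Sum>i\<in>I. of_nat (p ^ i) * Z i ^ (p ^ (k - i)))"
proof (rule weight_le_sum)
  fix i assume i: "i \<in> I"
  have "weight_le p (p ^ (k - i) * p ^ i) (Z i ^ p ^ (k - i))"
    using assms[OF i] by (intro weight_le_power) simp
  moreover have "p ^ (k - i) * p ^ i = p ^ k" using assms[OF i] by (simp add: power_add[symmetric])
  ultimately show "weight_le p (p ^ k) (of_nat (p ^ i) * Z i ^ p ^ (k - i))"
    by (intro weight_le_of_nat_mult) simp
qed

lemma weight_le_witt_add_poly: "weight_le p (p ^ k) (witt_add_poly p k)"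
proof (induction k rule: less_induct)
  case (less k)
  have "weight_le p (p ^ i) (wX i)" "weight_le p (p ^ i) (wY i)" for i
    using weight_le_mvar[of p "2 * i"] weight_le_mvar[of p "2 * i + 1"] by (simp_all add: wX_def wY_def)
  then have "weight_le p (p ^ k) (ghost_comp p wX k)" "weight_le p (p ^ k) (ghost_comp p wY k)"
    unfolding ghost_comp_def by (intro weight_le_power_sum; simp)+
  moreover have "weight_le p (p ^ k) (\<Sum>i<k. of_nat (p ^ i) * witt_add_poly p i ^ (p ^ (k - i)))"
    using less by (intro weight_le_power_sum) simp
  ultimately show ?case
    by (subst witt_add_poly_rec) (intro weight_le_mpoly_cdiv weight_le_diff weight_le_add)
qed

context
  fixes v :: "'a::field \<Rightarrow> int"
  assumes dvf: "normalized_dvf v"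
begin

lemma val_mult: "x \<noteq> 0 \<Longrightarrow> y \<noteq> 0 \<Longrightarrow> v (x * y) = v x + v y"
  using dvf by (simp add: normalized_dvf_def)

lemma val_add: "x \<noteq> 0 \<Longrightarrow> y \<noteq> 0 \<Longrightarrow> x + y \<noteq> 0 \<Longrightarrow> v (x + y) \<ge> min (v x) (v y)"
  using dvf by (simp add: normalized_dvf_def)

lemma val_one: "v 1 = 0"
  using val_mult[of 1 1] by simp

lemma val_uminus: "v (- x) = v x"
proof (cases "x = 0")
  case False
  have "v (-1) = 0" using val_mult[of "-1" "-1"] by (simp add: val_one)
  then show ?thesis using val_mult[of "-1" x] False by simp
qed simp

lemma val_power: "x \<noteq> 0 \<Longrightarrow> v (x ^ e) = int e * v x"
  by (induction e) (simp_all add: val_one val_mult algebra_simps)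

lemma val_of_nat: "of_nat k \<noteq> (0::'a) \<Longrightarrow> v (of_nat k) \<ge> 0"
proof (induction k)
  case (Suc k)
  show ?case
  proof (cases "of_nat k = (0::'a)")
    case False
    have "v (of_nat k + 1) \<ge> min (v (of_nat k)) (v 1)"
      using Suc.prems False by (intro val_add) (simp_all add: add.commute)
    then show ?thesis using Suc.IH False by (simp add: val_one add.commute)
  qed (simp add: val_one)
qed simp

lemma val_of_int: "of_int c \<noteq> (0::'a) \<Longrightarrow> v (of_int c) \<ge> 0"
  by (cases c) (auto simp: val_uminus val_of_nat simp del: of_nat_Suc)

lemma val_prod: "finite I \<Longrightarrow> (\<And>i. i \<in> I \<Longrightarrow> t i \<noteq> 0) \<Longrightarrow> v (prod t I) = (\<Sum>i\<in>I. v (t i))"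
  by (induction I rule: finite_induct) (simp_all add: val_one val_mult)

lemma scaled_val_add_lower_bound:
  assumes "Z > 0" and "t1 + t2 \<noteq> 0"
    and "t1 \<noteq> 0 \<Longrightarrow> B \<le> Z * v t1" and "t2 \<noteq> 0 \<Longrightarrow> B \<le> Z * v t2"
  shows "B \<le> Z * v (t1 + t2)"
proof (cases "t1 = 0 \<or> t2 = 0")
  case False
  then have "v (t1 + t2) \<ge> min (v t1) (v t2)" using assms(2) by (intro val_add) auto
  then show ?thesis using assms False by (smt (verit) mult_left_mono)
qed (use assms in auto)

lemma scaled_val_sum_lower_bound:
  assumes "Z > 0" and "\<And>i. i \<in> I \<Longrightarrow> t i \<noteq> 0 \<Longrightarrow> B \<le> Z * v (t i)"
  shows "sum t I \<noteq> 0 \<Longrightarrow> B \<le> Z * v (sum t I)"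
  using assms(2)
proof (induction I rule: infinite_finite_induct)
  case (insert x F)
  then show ?case
    by (cases "sum t F = 0")
      (auto intro!: scaled_val_add_lower_bound[OF assms(1)])
qed simp_all

lemma scaled_val_monom_lower_bound:
  assumes Z: "Z > 0" and M: "M \<ge> 0"
    and hx: "\<And>u. x u \<noteq> 0 \<Longrightarrow> - M * int (p ^ (u div 2)) \<le> Z * v (x u)"
    and nz: "monom_eval x mn \<noteq> 0"
  shows "- M * int (monom_weight p mn) \<le> Z * v (monom_eval x mn)"
proof -
  have xs: "x u \<noteq> 0" if "u \<in> Poly_Mapping.keys mn" for u
    using nz that by (auto simp: monom_eval_def in_keys_iff)
  have "v (monom_eval x mn) = (\<Sum>u\<in>Poly_Mapping.keys mn. int (Poly_Mapping.lookup mn u) * v (x u))"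
    unfolding monom_eval_def using xs by (subst val_prod) (auto simp: val_power)
  then have "Z * v (monom_eval x mn)
               = (\<Sum>u\<in>Poly_Mapping.keys mn. int (Poly_Mapping.lookup mn u) * (Z * v (x u)))"
    by (simp add: sum_distrib_left algebra_simps)
  also have "\<dots> \<ge> (\<Sum>u\<in>Poly_Mapping.keys mn. int (Poly_Mapping.lookup mn u) * (- M * int (p ^ (u div 2))))"
    by (intro sum_mono mult_left_mono hx xs) auto
  finally show ?thesis
    by (simp add: monom_weight_def sum_distrib_left algebra_simps)
qed

lemma scaled_val_mpoly_eval_lower_bound:
  assumes Z: "Z > 0" and M: "M \<ge> 0"
    and hx: "\<And>u. x u \<noteq> 0 \<Longrightarrow> - M * int (p ^ (u div 2)) \<le> Z * v (x u)"
    and W: "weight_le p W f"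
    and nz: "mpoly_eval x f \<noteq> 0"
  shows "- M * int W \<le> Z * v (mpoly_eval x f)"
proof -
  have "- M * int W \<le> Z * v (of_int (Poly_Mapping.lookup f mn) * monom_eval x mn)"
    if mn: "mn \<in> Poly_Mapping.keys f" and nz: "of_int (Poly_Mapping.lookup f mn) * monom_eval x mn \<noteq> 0"
    for mn
  proof -
    have c: "of_int (Poly_Mapping.lookup f mn) \<noteq> (0::'a)" and m: "monom_eval x mn \<noteq> 0"
      using nz by auto
    have "- M * int W \<le> - M * int (monom_weight p mn)"
      using W mn M by (auto simp: weight_le_def intro!: mult_left_mono)
    moreover note scaled_val_monom_lower_bound[OF Z M hx m]
    moreover have "v (of_int (Poly_Mapping.lookup f mn) * monom_eval x mn) \<ge> v (monom_eval x mn)"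
      using val_of_int[OF c] c m by (simp add: val_mult)
    ultimately show ?thesis using Z by (smt (verit) mult_left_mono)
  qed
  then show ?thesis
    using nz unfolding mpoly_eval_def monom_eval_def[symmetric]
    by (intro scaled_val_sum_lower_bound[OF Z]) auto
qed

end

section \<open>The filtration of \<open>W\<^sub>n(K)\<close>\<close>

lemma neg_le_mult_iff_neg_div:
  fixes m t d :: int
  assumes "d > 0"
  shows "- m \<le> d * t \<longleftrightarrow> - (m div d) \<le> t"
proof -
  have "m = d * (m div d) + m mod d" by simp
  moreover have "0 \<le> m mod d" "m mod d < d" using assms by simp_all
  ultimately have low: "d * (m div d) \<le> m" and high: "m < d * (m div d) + d"
    by linarith+
  show ?thesis
  proof
    assume le: "- m \<le> d * t"
    show "- (m div d) \<le> t"
    proof (rule ccontr)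
      assume "\<not> - (m div d) \<le> t"
      then have "d * t \<le> d * (- (m div d) - 1)"
        using assms by (intro mult_left_mono) auto
      then show False using le high by (simp add: algebra_simps)
    qed
  next
    assume "- (m div d) \<le> t"
    then have "d * (- (m div d)) \<le> d * t"
      using assms by (intro mult_left_mono) auto
    then show "- m \<le> d * t" using low by simp
  qed
qed

locale witt_dvf =
  fixes p n :: nat and v :: "'a::field \<Rightarrow> int"
  assumes prime: "Factorial_Ring.prime p" and char_p: "of_nat p = (0::'a)"
    and dvf: "normalized_dvf v"
begin

lemma p_pos: "p > 0"
  using prime_gt_0_nat[OF prime] .

abbreviation W :: "(nat \<Rightarrow> 'a) monoid" where
  "W \<equiv> WittGroup p n"

sublocale W: comm_group W
  by (rule comm_group_WittGroup[OF prime])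

text \<open>Multiplying the defining inequality of component \<open>i\<close> by \<open>p\<^sup>i\<close> gives the uniform scale
  \<open>p\<^sup>n\<^sup>-\<^sup>1\<close> and the bound \<open>-m p\<^sup>i\<close>, i.e.\ \<open>-m\<close> times the weight of component \<open>i\<close>.\<close>

definition scale :: int where
  "scale = int p ^ (n - 1)"

lemma scale_pos: "scale > 0"
  using p_pos by (simp add: scale_def)

lemma mem_fil_iff:
  "a \<in> fil p v n m \<longleftrightarrow>
     (\<forall>i\<ge>n. a i = 0) \<and> (\<forall>i<n. a i \<noteq> 0 \<longrightarrow> - m * int (p ^ i) \<le> scale * v (a i))"
proof -
  have "- m \<le> int p ^ (n - Suc i) * v x \<longleftrightarrow> - m * int p ^ i \<le> scale * v x" if "i < n" for i x
  proof -
    have "scale = int p ^ (n - Suc i) * int p ^ i"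
      using that by (simp add: scale_def power_add[symmetric])
    then show ?thesis
      using mult_le_cancel_right_pos[of "int p ^ i" "- m" "int p ^ (n - Suc i) * v x"] p_pos
      by (simp add: algebra_simps)
  qed
  then show ?thesis by (auto simp: fil_def WittGroup_simps)
qed

lemma fil_subset_carrier: "fil p v n m \<subseteq> carrier W"
  by (auto simp: fil_def)

lemma fil_mono: "m \<le> m' \<Longrightarrow> fil p v n m \<subseteq> fil p v n m'"
  by (auto simp: fil_def)

lemma scaled_val_witt_sum:
  assumes "m \<ge> 0"
    and "\<And>u. interleave a b u \<noteq> 0 \<Longrightarrow> - m * int (p ^ (u div 2)) \<le> scale * v (interleave a b u)"
    and "witt_sum p a b k \<noteq> 0"
  shows "- m * int (p ^ k) \<le> scale * v (witt_sum p a b k)"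
  using assms unfolding witt_sum_def
  by (intro scaled_val_mpoly_eval_lower_bound[OF dvf scale_pos _ _ weight_le_witt_add_poly])

lemma witt_add_mem_fil:
  assumes m: "m \<ge> 0" and a: "a \<in> fil p v n m" and b: "b \<in> fil p v n m"
  shows "witt_add p n a b \<in> fil p v n m"
  unfolding mem_fil_iff
proof (intro conjI allI impI)
  fix i assume "i \<ge> n"
  then show "witt_add p n a b i = 0" by (simp add: witt_add_def)
next
  fix i assume i: "i < n" and nz: "witt_add p n a b i \<noteq> 0"
  have "- m * int (p ^ (u div 2)) \<le> scale * v (interleave a b u)" if "interleave a b u \<noteq> 0" for u
    using a b that unfolding mem_fil_iff interleave_def by (cases "u div 2 < n"; cases "even u") auto
  then show "- m * int (p ^ i) \<le> scale * v (witt_add p n a b i)"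
    using scaled_val_witt_sum[OF m] nz i by (simp add: witt_add_eq_witt_trunc)
qed

lemma witt_neg_mem_fil:
  assumes m: "m \<ge> 0" and a: "a \<in> fil p v n m"
  shows "witt_trunc n (witt_neg p a) \<in> fil p v n m"
proof -
  have "- m * int (p ^ k) \<le> scale * v (witt_neg p a k)" if "k < n" "witt_neg p a k \<noteq> 0" for k
    using that
  proof (induction k rule: less_induct)
    case (less k)
    let ?a = "witt_trunc k a" and ?b = "witt_trunc k (witt_neg p a)"
    have "- m * int (p ^ (u div 2)) \<le> scale * v (interleave ?a ?b u)"
      if "interleave ?a ?b u \<noteq> 0" for u
      using that a less unfolding mem_fil_iff interleave_def witt_trunc_def
      by (auto split: if_splits)
    then have "witt_sum p ?a ?b k \<noteq> 0 \<Longrightarrow> - m * int (p ^ k) \<le> scale * v (- witt_sum p ?a ?b k)"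
      using scaled_val_witt_sum[OF m] by (simp add: val_uminus[OF dvf])
    moreover have "- a k \<noteq> 0 \<Longrightarrow> - m * int (p ^ k) \<le> scale * v (- a k)"
      using a less.prems(1) unfolding mem_fil_iff by (simp add: val_uminus[OF dvf])
    moreover have "witt_neg p a k = - a k + - witt_sum p ?a ?b k"
      by (subst witt_neg_rec) simp
    ultimately show ?case
      using less.prems(2) scaled_val_add_lower_bound[OF dvf scale_pos, of "- a k"
          "- witt_sum p ?a ?b k" "- m * int (p ^ k)"]
      by simp
  qed
  then show ?thesis unfolding mem_fil_iff by (auto simp: witt_trunc_def)
qed

lemma subgroup_fil:
  assumes "m \<ge> 0"
  shows "subgroup (fil p v n m) W"
proof
  fix x assume x: "x \<in> fil p v n m"
  then have "inv\<^bsub>W\<^esub> x = witt_trunc n (witt_neg p x)"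
    using fil_subset_carrier by (intro inv_WittGroup[OF prime]) blast
  then show "inv\<^bsub>W\<^esub> x \<in> fil p v n m" using witt_neg_mem_fil[OF assms x] by simp
qed (use fil_subset_carrier witt_add_mem_fil[OF assms] in \<open>auto simp: WittGroup_simps mem_fil_iff\<close>)

lemma witt_frob_closed: "a \<in> carrier W \<Longrightarrow> witt_frob p a \<in> carrier W"
  using p_pos by (simp add: WittGroup_simps witt_frob_def power_0_left)

lemma witt_frob_hom: "witt_frob p \<in> hom W W"
proof (rule homI)
  fix x y :: "nat \<Rightarrow> 'a"
  have "witt_sum p x y k ^ p = witt_sum p (witt_frob p x) (witt_frob p y) k" for k
    unfolding witt_frob_def by (rule witt_sum_power_char[OF prime char_p])
  then show "witt_frob p (x \<otimes>\<^bsub>W\<^esub> y) = witt_frob p x \<otimes>\<^bsub>W\<^esub> witt_frob p y"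
    using p_pos by (auto simp: WittGroup_simps witt_add_eq_witt_trunc witt_frob_def witt_trunc_def
        power_0_left)
qed (rule witt_frob_closed)

lemma witt_frob_eq_zero: "witt_frob p a = \<one>\<^bsub>W\<^esub> \<Longrightarrow> a = \<one>\<^bsub>W\<^esub>"
  by (auto simp: WittGroup_simps witt_frob_def fun_eq_iff)

text \<open>Frobenius multiplies valuations by \<open>p\<close>, so it maps \<open>fil\<^bsub>[m/p]\<^esub>\<close> into \<open>fil\<^sub>m\<close>, and the
  rounding in \<open>[m/p]\<close> is exactly right for the converse.\<close>

lemma witt_frob_mem_fil_iff:
  assumes "a \<in> carrier W"
  shows "witt_frob p a \<in> fil p v n (int m) \<longleftrightarrow> a \<in> fil p v n (int m div int p)"
proof -
  have "- int m \<le> int p ^ (n - 1 - i) * v (witt_frob p a i)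
          \<longleftrightarrow> - (int m div int p) \<le> int p ^ (n - 1 - i) * v (a i)"
    if "a i \<noteq> 0" for i
  proof -
    have "int p ^ (n - 1 - i) * v (witt_frob p a i) = int p * (int p ^ (n - 1 - i) * v (a i))"
      using that by (simp add: witt_frob_def val_power[OF dvf])
    then show ?thesis using p_pos by (simp only: neg_le_mult_iff_neg_div of_nat_0_less_iff)
  qed
  moreover have "witt_frob p a i \<noteq> 0 \<longleftrightarrow> a i \<noteq> 0" for i
    using p_pos by (simp add: witt_frob_def)
  ultimately show ?thesis
    using assms witt_frob_closed[OF assms] unfolding fil_def by auto
qed

end

section \<open>Sums of iterates of an injective endomorphism\<close>

definition dsum_copies :: "('a, 'b) monoid_scheme \<Rightarrow> 'a set \<Rightarrow> (nat \<Rightarrow> 'a) monoid" where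
  "dsum_copies G A = sum_group UNIV (\<lambda>j. G\<lparr>carrier := A\<rparr>)"

definition iter_sum :: "('a, 'b) monoid_scheme \<Rightarrow> ('a \<Rightarrow> 'a) \<Rightarrow> (nat \<Rightarrow> 'a) \<Rightarrow> 'a" where
  "iter_sum G F x = finprod G (\<lambda>j. (F ^^ j) (x j)) {j. x j \<noteq> \<one>\<^bsub>G\<^esub>}"

definition twisted_shift :: "('a, 'b) monoid_scheme \<Rightarrow> ('a \<Rightarrow> 'a) \<Rightarrow> (nat \<Rightarrow> 'a) \<Rightarrow> nat \<Rightarrow> 'a" where
  "twisted_shift G F x j = (if j = 0 then F (x 0) else F (x j) \<otimes>\<^bsub>G\<^esub> inv\<^bsub>G\<^esub> (x (j - 1)))"

definition iter_span :: "('a, 'b) monoid_scheme \<Rightarrow> ('a \<Rightarrow> 'a) \<Rightarrow> 'a set \<Rightarrow> 'a set" where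
  "iter_span G F A = generate G (\<Union>j. (F ^^ j) ` A)"

lemma (in comm_group) hom_finprod:
  assumes "h \<in> hom G G" and "f \<in> I \<rightarrow> carrier G"
  shows "h (finprod G f I) = finprod G (\<lambda>i. h (f i)) I"
proof -
  interpret group_hom G G h by unfold_locales (rule assms(1))
  show ?thesis
    using assms(2)
  proof (induction I rule: infinite_finite_induct)
    case (insert i I)
    then have "f i \<in> carrier G" "f \<in> I \<rightarrow> carrier G" "(\<lambda>i. h (f i)) \<in> I \<rightarrow> carrier G"
      by (auto simp: Pi_iff)
    with insert show ?case by simp
  qed simp_all
qed

lemma (in comm_group) finprod_lessThan_Suc:
  "f \<in> {..<Suc N} \<rightarrow> carrier G \<Longrightarrow> finprod G f {..<Suc N} = finprod G f {..<N} \<otimes> f N"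
  by (simp add: lessThan_Suc Pi_iff m_comm)

lemma (in comm_group) finprod_mem_subgroup:
  assumes H: "subgroup H G" and "finite I" and "\<And>i. i \<in> I \<Longrightarrow> f i \<in> H"
  shows "finprod G f I \<in> H"
  using assms(2,3)
proof (induction I rule: finite_induct)
  case (insert a I)
  then have "finprod G f (insert a I) = f a \<otimes> finprod G f I"
    using subgroup.mem_carrier[OF H] by (intro finprod_insert) auto
  then show ?case using insert subgroup.m_closed[OF H] by simp
qed (simp add: subgroup.one_closed[OF H])

text \<open>In the application \<open>F\<close> is Frobenius on \<open>W\<^sub>n(K)\<close>, \<open>Fs = fil\<^bsub>[m/p]\<^esub>\<close> and \<open>Fm = fil\<^sub>m\<close>.\<close>

locale endo_pair = comm_group G for G (structure) +
  fixes F :: "'a \<Rightarrow> 'a" and Fs Fm :: "'a set"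
  assumes F_hom: "F \<in> hom G G"
    and F_eq_one: "\<And>a. a \<in> carrier G \<Longrightarrow> F a = \<one> \<Longrightarrow> a = \<one>"
    and subgroup_Fs: "subgroup Fs G" and subgroup_Fm: "subgroup Fm G"
    and Fs_subset_Fm: "Fs \<subseteq> Fm" and F_Fs: "\<And>a. a \<in> Fs \<Longrightarrow> F a \<in> Fm"
    and F_preimage_Fm: "\<And>a. a \<in> carrier G \<Longrightarrow> F a \<in> Fm \<Longrightarrow> a \<in> Fs"
begin

sublocale F: group_hom G G F
  by unfold_locales (rule F_hom)

lemma iter_hom: "(F ^^ j) \<in> hom G G"
proof (induction j)
  case (Suc j)
  then have "(F ^^ j) a \<in> carrier G"
    and "(F ^^ j) (a \<otimes> b) = (F ^^ j) a \<otimes> (F ^^ j) b"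
    if "a \<in> carrier G" "b \<in> carrier G" for a b
    using that by (auto simp: hom_def)
  then show ?case by (intro homI) simp_all
qed (auto simp: hom_def)

lemma iter_closed [intro, simp]: "a \<in> carrier G \<Longrightarrow> (F ^^ j) a \<in> carrier G"
  using iter_hom by (auto simp: hom_def)

lemma iter_mult: "a \<in> carrier G \<Longrightarrow> b \<in> carrier G \<Longrightarrow> (F ^^ j) (a \<otimes> b) = (F ^^ j) a \<otimes> (F ^^ j) b"
  using iter_hom by (auto simp: hom_def)

lemma iter_one [simp]: "(F ^^ j) \<one> = \<one>"
  and iter_inv: "a \<in> carrier G \<Longrightarrow> (F ^^ j) (inv a) = inv ((F ^^ j) a)"
proof -
  interpret group_hom G G "F ^^ j" by unfold_locales (rule iter_hom)
  show "(F ^^ j) \<one> = \<one>" "a \<in> carrier G \<Longrightarrow> (F ^^ j) (inv a) = inv ((F ^^ j) a)" by simp_all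
qed

lemma F_inj:
  assumes a: "a \<in> carrier G" and b: "b \<in> carrier G" and eq: "F a = F b"
  shows "a = b"
proof -
  have "F (a \<otimes> inv b) = F b \<otimes> inv (F b)"
    using a b by (simp only: F.hom_mult F.hom_inv inv_closed eq)
  also have "\<dots> = \<one>" using b by simp
  finally have "a \<otimes> inv b = \<one>"
    using F_eq_one[of "a \<otimes> inv b"] a b by blast
  then have "inv (inv b) = a" using a b by (intro inv_equality) simp_all
  then show ?thesis using b by simp
qed

definition fin_seq :: "'a set \<Rightarrow> (nat \<Rightarrow> 'a) \<Rightarrow> bool" where
  "fin_seq A x \<longleftrightarrow> (\<forall>j. x j \<in> A) \<and> finite {j. x j \<noteq> \<one>}"

lemma carrier_dsum_copies: "subgroup A G \<Longrightarrow> carrier (dsum_copies G A) = {x. fin_seq A x}"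
  unfolding dsum_copies_def fin_seq_def
  by (subst carrier_sum_group) (auto intro: subgroup.subgroup_is_group is_group)

lemma mult_dsum_copies: "x \<otimes>\<^bsub>dsum_copies G A\<^esub> y = (\<lambda>j. x j \<otimes> y j)"
  by (simp add: dsum_copies_def restrict_def)

lemma group_dsum_copies: "subgroup A G \<Longrightarrow> group (dsum_copies G A)"
  unfolding dsum_copies_def by (rule sum_group) (auto intro: subgroup.subgroup_is_group is_group)

lemma fin_seq_carrier: "subgroup A G \<Longrightarrow> fin_seq A x \<Longrightarrow> x j \<in> carrier G"
  by (auto simp: fin_seq_def dest: subgroup.mem_carrier)

lemma fin_seq_bound: "fin_seq A x \<Longrightarrow> \<exists>N. \<forall>j\<ge>N. x j = \<one>"
  unfolding fin_seq_def by (meson finite_nat_set_iff_bounded mem_Collect_eq not_le)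

lemma fin_seq_mult:
  assumes "subgroup A G" and "fin_seq A x" and "fin_seq A y"
  shows "fin_seq A (\<lambda>j. x j \<otimes> y j)"
proof -
  have "{j. x j \<otimes> y j \<noteq> \<one>} \<subseteq> {j. x j \<noteq> \<one>} \<union> {j. y j \<noteq> \<one>}" by auto
  then show ?thesis
    using assms finite_subset by (auto simp: fin_seq_def subgroup.m_closed)
qed

lemma fin_seq_shift:
  assumes "fin_seq A x"
  shows "fin_seq A (\<lambda>k. x (i + k))"
proof -
  have "{k. x (i + k) \<noteq> \<one>} \<subseteq> (\<lambda>j. j - i) ` {j. x j \<noteq> \<one>}" by force
  then show ?thesis using assms finite_subset by (auto simp: fin_seq_def)
qed

lemma iter_sum_eq_finprod:
  assumes "subgroup A G" and "fin_seq A x" and "finite S" and "{j. x j \<noteq> \<one>} \<subseteq> S"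
  shows "iter_sum G F x = finprod G (\<lambda>j. (F ^^ j) (x j)) S"
  unfolding iter_sum_def
  by (rule finprod_mono_neutral_cong_left) (use assms fin_seq_carrier[OF assms(1,2)] in auto)

lemma iter_sum_closed: "subgroup A G \<Longrightarrow> fin_seq A x \<Longrightarrow> iter_sum G F x \<in> carrier G"
  unfolding iter_sum_def by (rule finprod_closed) (auto dest: fin_seq_carrier)

lemma iter_sum_one [simp]: "iter_sum G F (\<lambda>_. \<one>) = \<one>"
  by (simp add: iter_sum_def)

lemma iter_sum_mult:
  assumes A: "subgroup A G" and x: "fin_seq A x" and y: "fin_seq A y"
  shows "iter_sum G F (\<lambda>j. x j \<otimes> y j) = iter_sum G F x \<otimes> iter_sum G F y"
proof -
  let ?S = "{j. x j \<noteq> \<one>} \<union> {j. y j \<noteq> \<one>}"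
  have S: "finite ?S" using x y by (simp add: fin_seq_def)
  have xc: "x j \<in> carrier G" and yc: "y j \<in> carrier G" for j
    using fin_seq_carrier[OF A x] fin_seq_carrier[OF A y] .
  have "iter_sum G F (\<lambda>j. x j \<otimes> y j) = finprod G (\<lambda>j. (F ^^ j) (x j \<otimes> y j)) ?S"
    by (rule iter_sum_eq_finprod[OF A fin_seq_mult[OF A x y] S]) auto
  also have "\<dots> = finprod G (\<lambda>j. (F ^^ j) (x j)) ?S \<otimes> finprod G (\<lambda>j. (F ^^ j) (y j)) ?S"
    by (simp add: iter_mult xc yc Pi_iff finprod_multf)
  also have "\<dots> = iter_sum G F x \<otimes> iter_sum G F y"
    using iter_sum_eq_finprod[OF A x S] iter_sum_eq_finprod[OF A y S] by auto
  finally show ?thesis .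
qed

lemma iter_sum_unfold:
  assumes A: "subgroup A G" and x: "fin_seq A x"
  shows "iter_sum G F x = x 0 \<otimes> F (iter_sum G F (\<lambda>k. x (Suc k)))"
proof -
  obtain N where N: "\<forall>j\<ge>N. x j = \<one>" using fin_seq_bound[OF x] by blast
  have xc: "x j \<in> carrier G" for j using fin_seq_carrier[OF A x] .
  have shift: "fin_seq A (\<lambda>k. x (Suc k))" using fin_seq_shift[OF x, of 1] by simp
  have sub: "{j. x j \<noteq> \<one>} \<subseteq> {..<N}" using N not_less by blast
  have "{..<Suc N} = insert 0 (Suc ` {..<N})" by (auto simp: image_iff less_Suc_eq_0_disj)
  moreover have "iter_sum G F x = finprod G (\<lambda>j. (F ^^ j) (x j)) {..<Suc N}"
    using sub by (intro iter_sum_eq_finprod[OF A x]) auto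
  moreover have "iter_sum G F (\<lambda>k. x (Suc k)) = finprod G (\<lambda>k. (F ^^ k) (x (Suc k))) {..<N}"
    using sub by (intro iter_sum_eq_finprod[OF A shift]) auto
  ultimately show ?thesis
    using xc by (simp add: finprod_reindex hom_finprod[OF F_hom] Pi_iff funpow_swap1)
qed

lemma iter_sum_single:
  assumes "subgroup A G" and "a \<in> A"
  shows "iter_sum G F (\<lambda>i. if i = j then a else \<one>) = (F ^^ j) a"
proof (induction j)
  case 0
  then show ?case
    using iter_sum_unfold[OF assms(1), of "\<lambda>i. if i = 0 then a else \<one>"] assms
    by (simp add: fin_seq_def subgroup.one_closed subgroup.mem_carrier)
next
  case (Suc j)
  then show ?case
    using iter_sum_unfold[OF assms(1), of "\<lambda>i. if i = Suc j then a else \<one>"] assms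
    by (simp add: fin_seq_def subgroup.one_closed subgroup.mem_carrier)
qed

lemma subgroup_iter_span: "subgroup A G \<Longrightarrow> subgroup (iter_span G F A) G"
  unfolding iter_span_def by (intro generate_is_subgroup) (auto dest: subgroup.mem_carrier)

lemma iter_sum_mem_iter_span:
  assumes A: "subgroup A G" and x: "fin_seq A x"
  shows "iter_sum G F x \<in> iter_span G F A"
proof -
  have "(F ^^ j) (x j) \<in> iter_span G F A" for j
    unfolding iter_span_def using x by (intro generate.incl) (auto simp: fin_seq_def)
  then show ?thesis
    unfolding iter_sum_def using x
    by (intro finprod_mem_subgroup[OF subgroup_iter_span[OF A]]) (simp_all add: fin_seq_def)
qed

lemma iter_span_subset_iter_sum_image:
  assumes A: "subgroup A G"
  shows "iter_span G F A \<subseteq> iter_sum G F ` {x. fin_seq A x}"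
proof
  have single: "(F ^^ j) a \<in> iter_sum G F ` {x. fin_seq A x}" if "a \<in> A" for a j
  proof -
    have "fin_seq A (\<lambda>i. if i = j then a else \<one>)"
      using that by (simp add: fin_seq_def subgroup.one_closed[OF A])
    then show ?thesis using iter_sum_single[OF A that] by (intro image_eqI) auto
  qed
  fix h assume "h \<in> iter_span G F A"
  then show "h \<in> iter_sum G F ` {x. fin_seq A x}"
    unfolding iter_span_def
  proof (induction h rule: generate.induct)
    case one
    have "fin_seq A (\<lambda>_. \<one>)" by (simp add: fin_seq_def subgroup.one_closed[OF A])
    then show ?case by (intro image_eqI[where x = "\<lambda>_. \<one>"]) simp_all
  next
    case (incl h)
    then show ?case using single by blast
  next
    case (inv h)
    then obtain j a where "a \<in> A" and "h = (F ^^ j) a" by blast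
    then show ?case
      using single[of "inv a" j] subgroup.m_inv_closed[OF A]
      by (simp add: iter_inv subgroup.mem_carrier[OF A])
  next
    case (eng h1 h2)
    then obtain x1 x2 where "fin_seq A x1" "h1 = iter_sum G F x1" "fin_seq A x2" "h2 = iter_sum G F x2"
      by blast
    then show ?case
      using iter_sum_mult[OF A] fin_seq_mult[OF A]
      by (intro image_eqI[where x = "\<lambda>j. x1 j \<otimes> x2 j"]) auto
  qed
qed

lemma iter_sum_image:
  "subgroup A G \<Longrightarrow> iter_sum G F ` {x. fin_seq A x} = iter_span G F A"
  using iter_sum_mem_iter_span iter_span_subset_iter_sum_image by blast

end

context endo_pair
begin

lemma fin_seq_twisted_shift:
  assumes x: "fin_seq Fs x"
  shows "fin_seq Fm (twisted_shift G F x)"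
proof -
  have xFs: "x j \<in> Fs" for j using x by (simp add: fin_seq_def)
  have "twisted_shift G F x j \<in> Fm" for j
  proof (cases j)
    case (Suc i)
    then show ?thesis
      using F_Fs[OF xFs] xFs[of i] Fs_subset_Fm
      by (auto simp: twisted_shift_def intro!: subgroup.m_closed[OF subgroup_Fm]
          subgroup.m_inv_closed[OF subgroup_Fm])
  qed (simp add: twisted_shift_def F_Fs[OF xFs])
  moreover have "{j. twisted_shift G F x j \<noteq> \<one>} \<subseteq> {j. x j \<noteq> \<one>} \<union> Suc ` {j. x j \<noteq> \<one>}"
  proof
    fix j assume "j \<in> {j. twisted_shift G F x j \<noteq> \<one>}"
    then show "j \<in> {j. x j \<noteq> \<one>} \<union> Suc ` {j. x j \<noteq> \<one>}"
      using fin_seq_carrier[OF subgroup_Fs x] by (cases j) (auto simp: twisted_shift_def)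
  qed
  then have "finite {j. twisted_shift G F x j \<noteq> \<one>}"
    using x by (auto simp: fin_seq_def intro: finite_subset)
  ultimately show ?thesis by (simp add: fin_seq_def)
qed

lemma twisted_shift_hom: "twisted_shift G F \<in> hom (dsum_copies G Fs) (dsum_copies G Fm)"
proof (rule homI)
  fix x y assume "x \<in> carrier (dsum_copies G Fs)" "y \<in> carrier (dsum_copies G Fs)"
  then have xc: "x j \<in> carrier G" and yc: "y j \<in> carrier G" for j
    by (auto simp: carrier_dsum_copies[OF subgroup_Fs] intro: fin_seq_carrier[OF subgroup_Fs])
  then have "F (x (Suc i) \<otimes> y (Suc i)) \<otimes> inv (x i \<otimes> y i)
      = (F (x (Suc i)) \<otimes> inv (x i)) \<otimes> (F (y (Suc i)) \<otimes> inv (y i))" for i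
    by (simp add: F.hom_mult inv_mult m_ac)
  with xc yc show "twisted_shift G F (x \<otimes>\<^bsub>dsum_copies G Fs\<^esub> y)
               = twisted_shift G F x \<otimes>\<^bsub>dsum_copies G Fm\<^esub> twisted_shift G F y"
    by (auto simp: fun_eq_iff mult_dsum_copies twisted_shift_def F.hom_mult gr0_conv_Suc)
qed (simp add: carrier_dsum_copies subgroup_Fs subgroup_Fm fin_seq_twisted_shift)

lemma inj_on_twisted_shift: "inj_on (twisted_shift G F) (carrier (dsum_copies G Fs))"
proof (rule inj_onI)
  fix x y
  assume "x \<in> carrier (dsum_copies G Fs)" "y \<in> carrier (dsum_copies G Fs)"
    and eq: "twisted_shift G F x = twisted_shift G F y"
  then have xc: "x j \<in> carrier G" and yc: "y j \<in> carrier G" for j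
    by (auto simp: carrier_dsum_copies[OF subgroup_Fs] intro: fin_seq_carrier[OF subgroup_Fs])
  have "x j = y j" for j
  proof (induction j)
    case 0
    then show ?case
      by (rule F_inj[OF xc yc]) (use fun_cong[OF eq, of 0] in \<open>simp add: twisted_shift_def\<close>)
  next
    case (Suc j)
    then have "F (x (Suc j)) \<otimes> inv (x j) = F (y (Suc j)) \<otimes> inv (x j)"
      using fun_cong[OF eq, of "Suc j"] by (simp add: twisted_shift_def)
    then have "F (x (Suc j)) = F (y (Suc j))"
      by (rule r_cancel[OF _ F.hom_closed[OF xc] F.hom_closed[OF yc] inv_closed[OF xc]])
    then show ?case by (rule F_inj[OF xc yc])
  qed
  then show "x = y" by (rule ext)
qed

lemma finprod_twisted_shift_telescope:
  assumes x: "fin_seq Fs x"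
  shows "finprod G (\<lambda>j. (F ^^ j) (twisted_shift G F x j)) {..<Suc N} = (F ^^ Suc N) (x N)"
proof (induction N)
  case 0
  then show ?case
    using fin_seq_carrier[OF subgroup_Fs x] by (simp add: lessThan_Suc twisted_shift_def)
next
  case (Suc N)
  have xc: "x j \<in> carrier G" for j using fin_seq_carrier[OF subgroup_Fs x] .
  have "twisted_shift G F x j \<in> carrier G" for j
    using fin_seq_carrier[OF subgroup_Fm fin_seq_twisted_shift[OF x]] .
  then have "finprod G (\<lambda>j. (F ^^ j) (twisted_shift G F x j)) {..<Suc (Suc N)}
               = finprod G (\<lambda>j. (F ^^ j) (twisted_shift G F x j)) {..<Suc N}
                 \<otimes> (F ^^ Suc N) (twisted_shift G F x (Suc N))"
    by (intro finprod_lessThan_Suc) auto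
  also have "\<dots> = (F ^^ Suc N) (x N) \<otimes> ((F ^^ Suc (Suc N)) (x (Suc N)) \<otimes> inv ((F ^^ Suc N) (x N)))"
    using xc by (simp only: Suc.IH) (simp add: twisted_shift_def iter_mult iter_inv funpow_swap1)
  also have "\<dots> = (F ^^ Suc (Suc N)) (x (Suc N))"
  proof -
    have a: "(F ^^ Suc N) (x N) \<in> carrier G" and b: "(F ^^ Suc (Suc N)) (x (Suc N)) \<in> carrier G"
      using xc by (rule iter_closed)+
    show ?thesis by (simp only: m_lcomm[OF a b inv_closed[OF a]] r_inv[OF a] r_one[OF b])
  qed
  finally show ?case .
qed

lemma iter_sum_twisted_shift:
  assumes x: "fin_seq Fs x"
  shows "iter_sum G F (twisted_shift G F x) = \<one>"
proof -
  obtain B where B: "\<And>j. j \<ge> B \<Longrightarrow> x j = \<one>" using fin_seq_bound[OF x] by blast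
  have vanish: "twisted_shift G F x j = \<one>" if "j \<ge> Suc B" for j
  proof -
    from that obtain i where j: "j = Suc i" using Suc_le_D by blast
    with that have "x i = \<one>" "x j = \<one>" using B by simp_all
    then show ?thesis using j by (simp add: twisted_shift_def)
  qed
  have "{j. twisted_shift G F x j \<noteq> \<one>} \<subseteq> {..<Suc B}"
    using vanish not_less by blast
  then have "iter_sum G F (twisted_shift G F x) = finprod G (\<lambda>j. (F ^^ j) (twisted_shift G F x j)) {..<Suc B}"
    by (intro iter_sum_eq_finprod[OF subgroup_Fm fin_seq_twisted_shift[OF x]]) simp
  also have "\<dots> = (F ^^ Suc B) (x B)"
    by (rule finprod_twisted_shift_telescope[OF x])
  finally show ?thesis using B by simp
qed

text \<open>An element \<open>y\<close> of the kernel is \<open>twisted_shift x\<close> for \<open>x\<^sub>j = (\<Sum>\<^sub>k F\<^sup>k y\<^sub>j\<^sub>+\<^sub>1\<^sub>+\<^sub>k)\<inverse>\<close>.\<close>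

lemma kernel_preimage:
  assumes y: "fin_seq Fm y" and ker: "iter_sum G F y = \<one>"
  obtains x where "F (x 0) = y 0" and "\<And>j. F (x (Suc j)) = y (Suc j) \<otimes> x j"
    and "finite {j. x j \<noteq> \<one>}" and "\<And>j. x j \<in> carrier G"
proof -
  define s where "s j = iter_sum G F (\<lambda>k. y (j + k))" for j
  define x where "x j = inv (s (Suc j))" for j
  have x_s: "x j = inv (s (Suc j))" for j by (simp add: x_def)
  have yc: "y j \<in> carrier G" for j using fin_seq_carrier[OF subgroup_Fm y] .
  have sc: "s j \<in> carrier G" for j
    unfolding s_def by (rule iter_sum_closed[OF subgroup_Fm fin_seq_shift[OF y]])
  have xc: "x j \<in> carrier G" for j by (simp add: x_s sc)
  have s_unfold: "s j = y j \<otimes> F (s (Suc j))" for j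
    using iter_sum_unfold[OF subgroup_Fm fin_seq_shift[OF y, of j]] by (simp add: s_def)
  have "y 0 \<otimes> F (s 1) = \<one>"
    using s_unfold[of 0] ker by (simp add: s_def)
  then have x0: "F (x 0) = y 0"
    using yc sc by (simp add: x_s F.hom_inv inv_equality)
  have xSuc: "F (x (Suc j)) = y (Suc j) \<otimes> x j" for j
  proof -
    have "y (Suc j) \<otimes> x j = y (Suc j) \<otimes> (inv (y (Suc j)) \<otimes> inv (F (s (Suc (Suc j)))))"
      using yc sc by (simp add: x_s s_unfold[of "Suc j"] inv_mult)
    also have "\<dots> = F (x (Suc j))"
      using yc sc by (simp add: x_s F.hom_inv m_assoc[symmetric])
    finally show ?thesis by simp
  qed
  obtain M where M: "\<forall>j\<ge>M. y j = \<one>" using fin_seq_bound[OF y] by blast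
  have "x j = \<one>" if "j \<ge> M" for j
  proof -
    have "(\<lambda>k. y (Suc j + k)) = (\<lambda>_. \<one>)" using M that by auto
    then show ?thesis by (simp add: x_s s_def)
  qed
  then have "{j. x j \<noteq> \<one>} \<subseteq> {..<M}" using not_less by blast
  then have "finite {j. x j \<noteq> \<one>}" by (rule finite_subset) simp
  then show thesis by (rule that[OF x0 xSuc _ xc])
qed

lemma kernel_subset_twisted_shift_image:
  assumes y: "fin_seq Fm y" and ker: "iter_sum G F y = \<one>"
  shows "\<exists>x. fin_seq Fs x \<and> twisted_shift G F x = y"
proof -
  obtain x where x: "F (x 0) = y 0" "\<And>j. F (x (Suc j)) = y (Suc j) \<otimes> x j"
    "finite {j. x j \<noteq> \<one>}" "\<And>j. x j \<in> carrier G"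
    using kernel_preimage[OF y ker] by blast
  have yc: "y j \<in> carrier G" for j using fin_seq_carrier[OF subgroup_Fm y] .
  have "x j \<in> Fs" for j
  proof (induction j)
    case 0
    show ?case using x(1,4) y by (intro F_preimage_Fm) (simp_all add: fin_seq_def)
  next
    case (Suc j)
    then have "F (x (Suc j)) \<in> Fm"
      using x(2) y Fs_subset_Fm subgroup.m_closed[OF subgroup_Fm] by (auto simp: fin_seq_def)
    then show ?case using x(4) by (intro F_preimage_Fm)
  qed
  then have "fin_seq Fs x" using x(3) by (simp add: fin_seq_def)
  moreover have "twisted_shift G F x = y"
    using x(1,2,4) yc by (auto simp: fun_eq_iff twisted_shift_def gr0_conv_Suc m_assoc)
  ultimately show ?thesis by blast
qed

theorem dsum_copies_exact:
  defines "T \<equiv> G\<lparr>carrier := iter_span G F Fm\<rparr>"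
  shows "twisted_shift G F \<in> hom (dsum_copies G Fs) (dsum_copies G Fm)
   \<and> inj_on (twisted_shift G F) (carrier (dsum_copies G Fs))
   \<and> iter_sum G F \<in> hom (dsum_copies G Fm) T
   \<and> twisted_shift G F ` carrier (dsum_copies G Fs) = kernel (dsum_copies G Fm) T (iter_sum G F)
   \<and> iter_sum G F ` carrier (dsum_copies G Fm) = iter_span G F Fm"
proof (intro conjI twisted_shift_hom inj_on_twisted_shift)
  show "iter_sum G F \<in> hom (dsum_copies G Fm) T"
    using iter_sum_image[OF subgroup_Fm]
    by (intro homI) (auto simp: T_def carrier_dsum_copies[OF subgroup_Fm] mult_dsum_copies
        iter_sum_mult[OF subgroup_Fm])
  show "twisted_shift G F ` carrier (dsum_copies G Fs) = kernel (dsum_copies G Fm) T (iter_sum G F)"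
    using fin_seq_twisted_shift iter_sum_twisted_shift kernel_subset_twisted_shift_image
    by (fastforce simp: kernel_def T_def carrier_dsum_copies[OF subgroup_Fs]
        carrier_dsum_copies[OF subgroup_Fm])
  show "iter_sum G F ` carrier (dsum_copies G Fm) = iter_span G F Fm"
    by (simp add: carrier_dsum_copies[OF subgroup_Fm] iter_sum_image[OF subgroup_Fm])
qed

end

section \<open>The induced isomorphism of quotients\<close>

lemma (in group) mult_inv_eq_one_iff:
  assumes "a \<in> carrier G" and "b \<in> carrier G"
  shows "a \<otimes> inv b = \<one> \<longleftrightarrow> a = b"
proof
  assume "a \<otimes> inv b = \<one>"
  then have "inv (inv b) = a" using assms by (intro inv_equality) simp_all
  then show "a = b" using assms by simp
qed (use assms in simp)

lemma group_homs_eq_iff_of_same_kernel: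
  assumes "group_hom G1 Q \<pi>" and "group_hom G1 T \<Phi>"
    and ker: "\<And>g. g \<in> carrier G1 \<Longrightarrow> \<pi> g = \<one>\<^bsub>Q\<^esub> \<longleftrightarrow> \<Phi> g = \<one>\<^bsub>T\<^esub>"
    and g: "g \<in> carrier G1" "g' \<in> carrier G1"
  shows "\<pi> g = \<pi> g' \<longleftrightarrow> \<Phi> g = \<Phi> g'"
proof -
  interpret P: group_hom G1 Q \<pi> by (rule assms(1))
  interpret H: group_hom G1 T \<Phi> by (rule assms(2))
  have "\<pi> g = \<pi> g' \<longleftrightarrow> \<pi> (g \<otimes>\<^bsub>G1\<^esub> inv\<^bsub>G1\<^esub> g') = \<one>\<^bsub>Q\<^esub>"
    using g by (simp add: P.H.mult_inv_eq_one_iff)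
  also have "\<dots> \<longleftrightarrow> \<Phi> (g \<otimes>\<^bsub>G1\<^esub> inv\<^bsub>G1\<^esub> g') = \<one>\<^bsub>T\<^esub>"
    using g by (intro ker) simp
  also have "\<dots> \<longleftrightarrow> \<Phi> g = \<Phi> g'"
    using g by (simp add: H.H.mult_inv_eq_one_iff)
  finally show ?thesis .
qed

lemma iso_of_surj_homs_same_kernel:
  assumes G1: "group G1" and Q: "group Q" and T: "group T"
    and \<pi>: "\<pi> \<in> hom G1 Q" "\<pi> ` carrier G1 = carrier Q"
    and \<Phi>: "\<Phi> \<in> hom G1 T" "\<Phi> ` carrier G1 = carrier T"
    and ker: "\<And>g. g \<in> carrier G1 \<Longrightarrow> \<pi> g = \<one>\<^bsub>Q\<^esub> \<longleftrightarrow> \<Phi> g = \<one>\<^bsub>T\<^esub>"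
  shows "\<exists>\<psi>. \<psi> \<in> iso Q T \<and> (\<forall>g \<in> carrier G1. \<psi> (\<pi> g) = \<Phi> g)"
proof -
  have hom_\<pi>: "group_hom G1 Q \<pi>" and hom_\<Phi>: "group_hom G1 T \<Phi>"
    by (intro group_hom.intro group_hom_axioms.intro G1 Q T \<pi>(1) \<Phi>(1))+
  interpret P: group_hom G1 Q \<pi> by (rule hom_\<pi>)
  interpret H: group_hom G1 T \<Phi> by (rule hom_\<Phi>)
  have same_fibres: "\<pi> g = \<pi> g' \<longleftrightarrow> \<Phi> g = \<Phi> g'" if "g \<in> carrier G1" "g' \<in> carrier G1" for g g'
    by (rule group_homs_eq_iff_of_same_kernel[OF hom_\<pi> hom_\<Phi> ker that])
  define \<psi> where "\<psi> q = \<Phi> (SOME g. g \<in> carrier G1 \<and> \<pi> g = q)" for q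
  have \<psi>_\<pi>: "\<psi> (\<pi> g) = \<Phi> g" if g: "g \<in> carrier G1" for g
  proof -
    have "\<exists>g'. g' \<in> carrier G1 \<and> \<pi> g' = \<pi> g" using g by blast
    then have "(SOME g'. g' \<in> carrier G1 \<and> \<pi> g' = \<pi> g) \<in> carrier G1 \<and>
               \<pi> (SOME g'. g' \<in> carrier G1 \<and> \<pi> g' = \<pi> g) = \<pi> g"
      by (rule someI_ex)
    then show ?thesis using same_fibres[OF _ g] unfolding \<psi>_def by blast
  qed
  have preimage: "\<exists>g \<in> carrier G1. q = \<pi> g" if "q \<in> carrier Q" for q
    using that \<pi>(2) by blast
  have hom: "\<psi> \<in> hom Q T"
  proof (rule homI)
    fix q assume "q \<in> carrier Q"
    then obtain g where "g \<in> carrier G1" "q = \<pi> g" using preimage by blast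
    then show "\<psi> q \<in> carrier T" using \<psi>_\<pi> by simp
  next
    fix q1 q2 assume "q1 \<in> carrier Q" "q2 \<in> carrier Q"
    then obtain g1 g2 where "g1 \<in> carrier G1" "q1 = \<pi> g1" "g2 \<in> carrier G1" "q2 = \<pi> g2"
      using preimage by meson
    then show "\<psi> (q1 \<otimes>\<^bsub>Q\<^esub> q2) = \<psi> q1 \<otimes>\<^bsub>T\<^esub> \<psi> q2"
      using \<psi>_\<pi> by (simp flip: P.hom_mult)
  qed
  have "inj_on \<psi> (carrier Q)"
  proof (rule inj_onI)
    fix q1 q2 assume "q1 \<in> carrier Q" "q2 \<in> carrier Q" and eq: "\<psi> q1 = \<psi> q2"
    then obtain g1 g2 where "g1 \<in> carrier G1" "q1 = \<pi> g1" "g2 \<in> carrier G1" "q2 = \<pi> g2"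
      using preimage by meson
    then show "q1 = q2" using eq \<psi>_\<pi> same_fibres by simp
  qed
  moreover have "carrier T \<subseteq> \<psi> ` carrier Q"
  proof
    fix t assume "t \<in> carrier T"
    then obtain g where "g \<in> carrier G1" "t = \<Phi> g" using \<Phi>(2) by blast
    then show "t \<in> \<psi> ` carrier Q" using \<psi>_\<pi> by (intro image_eqI[where x = "\<pi> g"]) simp_all
  qed
  ultimately show ?thesis
    using hom \<psi>_\<pi> by (auto simp: iso_def bij_betw_def hom_def)
qed

lemma (in comm_group) comm_group_subgroup:
  assumes "subgroup A G"
  shows "comm_group (G\<lparr>carrier := A\<rparr>)"
proof -
  interpret R: group "G\<lparr>carrier := A\<rparr>" by (rule subgroup.subgroup_is_group[OF assms is_group])
  show ?thesis
    by (rule R.group_comm_groupI) (use subgroup.mem_carrier[OF assms] in \<open>auto simp: m_comm\<close>)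
qed

lemma (in comm_group) normal_subgroup_restrict:
  assumes "subgroup A G" and "subgroup N G" and "N \<subseteq> A"
  shows "N \<lhd> G\<lparr>carrier := A\<rparr>"
proof -
  interpret R: comm_group "G\<lparr>carrier := A\<rparr>" by (rule comm_group_subgroup[OF assms(1)])
  show ?thesis by (simp add: R.normal_iff_subgroup subgroup_incl[OF assms(2,1,3)])
qed

lemma r_coset_carrier_update: "r_coset (G\<lparr>carrier := A\<rparr>) = r_coset G"
  by (simp add: r_coset_def fun_eq_iff)

lemma set_mult_carrier_update: "set_mult (G\<lparr>carrier := A\<rparr>) = set_mult G"
  by (simp add: set_mult_def fun_eq_iff)

context endo_pair
begin

definition Fs_FFs :: "'a set" where
  "Fs_FFs = Fs <#> F ` Fs"

lemma subgroup_Fs_FFs: "subgroup Fs_FFs G"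
  unfolding Fs_FFs_def
  by (intro mult_subgroups subgroup_Fs F.subgroup_img_is_subgroup)

lemma mem_Fs_FFs_iff: "a \<in> Fs_FFs \<longleftrightarrow> (\<exists>s\<in>Fs. \<exists>t\<in>Fs. a = s \<otimes> F t)"
  unfolding Fs_FFs_def set_mult_def by blast

lemma Fs_FFs_subset_Fm: "Fs_FFs \<subseteq> Fm"
proof
  fix a assume "a \<in> Fs_FFs"
  then obtain s t where "s \<in> Fs" "t \<in> Fs" "a = s \<otimes> F t" by (auto simp: mem_Fs_FFs_iff)
  then show "a \<in> Fm" using Fs_subset_Fm F_Fs subgroup.m_closed[OF subgroup_Fm] by blast
qed

lemma rcos_eq_self_iff: "subgroup H G \<Longrightarrow> a \<in> carrier G \<Longrightarrow> H #> a = H \<longleftrightarrow> a \<in> H"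
  using rcos_self subgroup.rcos_const[OF _ is_group] by metis

lemma fin_seq_inv: "subgroup A G \<Longrightarrow> fin_seq A y \<Longrightarrow> fin_seq A (\<lambda>i. inv (y i))"
  by (simp add: fin_seq_def subgroup.m_inv_closed fin_seq_carrier cong: conj_cong)

lemma iter_sum_inv:
  assumes "subgroup A G" and "fin_seq A y"
  shows "iter_sum G F (\<lambda>i. inv (y i)) = inv (iter_sum G F y)"
proof -
  have closed: "iter_sum G F y \<in> carrier G" "iter_sum G F (\<lambda>i. inv (y i)) \<in> carrier G"
    using iter_sum_closed[OF assms] iter_sum_closed[OF assms(1) fin_seq_inv[OF assms]] .
  have "iter_sum G F y \<otimes> iter_sum G F (\<lambda>i. inv (y i)) = \<one>"
    using iter_sum_mult[OF assms fin_seq_inv[OF assms]] fin_seq_carrier[OF assms] by simp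
  then have "iter_sum G F (\<lambda>i. inv (y i)) \<otimes> iter_sum G F y = \<one>"
    using closed by (simp add: m_comm)
  then have "inv (iter_sum G F y) = iter_sum G F (\<lambda>i. inv (y i))"
    using closed by (rule inv_equality)
  then show ?thesis by simp
qed

lemma iter_sum_mem_span_if_mem_Fs_FFs:
  assumes "fin_seq Fm x" and "\<And>i. x i \<in> Fs_FFs"
  shows "iter_sum G F x \<in> iter_span G F Fs"
proof -
  have "(F ^^ i) (x i) \<in> iter_span G F Fs" for i
  proof -
    obtain s t where st: "s \<in> Fs" "t \<in> Fs" "x i = s \<otimes> F t"
      using assms(2) mem_Fs_FFs_iff by blast
    then have "(F ^^ i) (x i) = (F ^^ i) s \<otimes> (F ^^ Suc i) t"
      using subgroup.mem_carrier[OF subgroup_Fs] by (simp add: iter_mult funpow_swap1)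
    moreover have "(F ^^ i) s \<in> iter_span G F Fs" "(F ^^ Suc i) t \<in> iter_span G F Fs"
      unfolding iter_span_def using st by (blast intro: generate.incl)+
    ultimately show ?thesis
      using subgroup.m_closed[OF subgroup_iter_span[OF subgroup_Fs]] by simp
  qed
  then show ?thesis
    unfolding iter_sum_def using assms(1)
    by (intro finprod_mem_subgroup[OF subgroup_iter_span[OF subgroup_Fs]]) (simp_all add: fin_seq_def)
qed

text \<open>Conversely, if \<open>\<Sum> F\<^sup>i x\<^sub>i = \<Sum> F\<^sup>i y\<^sub>i\<close> with \<open>y\<^sub>i \<in> Fs\<close>, then \<open>x y\<inverse>\<close> lies in the kernel, hence equals
  \<open>twisted_shift w\<close>, and \<open>x\<^sub>i = (w\<^sub>i\<^sub>-\<^sub>1\<inverse> y\<^sub>i) F(w\<^sub>i)\<close>.\<close>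

lemma mem_Fs_FFs_if_iter_sum_mem_span:
  assumes x: "fin_seq Fm x" and "iter_sum G F x \<in> iter_span G F Fs"
  shows "x i \<in> Fs_FFs"
proof -
  obtain y where y: "fin_seq Fs y" and eq: "iter_sum G F x = iter_sum G F y"
    using assms(2) iter_sum_image[OF subgroup_Fs] by auto
  have xc: "x j \<in> carrier G" and yc: "y j \<in> carrier G" for j
    using fin_seq_carrier[OF subgroup_Fm x] fin_seq_carrier[OF subgroup_Fs y] .
  have y_Fm: "fin_seq Fm y" using y Fs_subset_Fm by (auto simp: fin_seq_def)
  define z where "z = (\<lambda>j. x j \<otimes> inv (y j))"
  have z: "fin_seq Fm z"
    unfolding z_def by (intro fin_seq_mult[OF subgroup_Fm x] fin_seq_inv[OF subgroup_Fm y_Fm])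
  have "iter_sum G F z = \<one>"
    using iter_sum_mult[OF subgroup_Fm x fin_seq_inv[OF subgroup_Fm y_Fm]]
      iter_sum_inv[OF subgroup_Fm y_Fm] iter_sum_closed[OF subgroup_Fm y_Fm]
    by (simp add: z_def eq)
  then obtain w where w: "fin_seq Fs w" and hw: "twisted_shift G F w = z"
    using kernel_subset_twisted_shift_image[OF z] by blast
  have wc: "w j \<in> carrier G" for j using fin_seq_carrier[OF subgroup_Fs w] .
  have x_eq: "x j = z j \<otimes> y j" for j using xc yc by (simp add: z_def m_assoc)
  have zc: "z j \<in> carrier G" for j using xc yc by (simp add: z_def)
  have wFs: "w j \<in> Fs" and yFs: "y j \<in> Fs" for j using w y by (simp_all add: fin_seq_def)
  show ?thesis
  proof (cases i)
    case 0
    then have "x i = y 0 \<otimes> F (w 0)"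
      using x_eq[of 0] fun_cong[OF hw, of 0] m_comm[OF zc yc] by (simp add: twisted_shift_def)
    then show ?thesis using wFs yFs by (auto simp: mem_Fs_FFs_iff)
  next
    case (Suc j)
    then have "x i = (inv (w j) \<otimes> y i) \<otimes> F (w i)"
      using x_eq[of i] fun_cong[OF hw, of i] wc yc zc by (simp add: twisted_shift_def m_ac)
    moreover have "inv (w j) \<otimes> y i \<in> Fs"
      using wFs yFs subgroup.m_closed[OF subgroup_Fs] subgroup.m_inv_closed[OF subgroup_Fs] by simp
    ultimately show ?thesis using wFs by (auto simp: mem_Fs_FFs_iff)
  qed
qed

end

context endo_pair
begin

lemma normal_Fs_FFs: "Fs_FFs \<lhd> G\<lparr>carrier := Fm\<rparr>"
  by (rule normal_subgroup_restrict[OF subgroup_Fm subgroup_Fs_FFs Fs_FFs_subset_Fm])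

lemma group_sum_quotients: "group (sum_group UNIV (\<lambda>i::nat. G\<lparr>carrier := Fm\<rparr> Mod Fs_FFs))"
  by (intro sum_group normal.factorgroup_is_group[OF normal_Fs_FFs])

lemma carrier_sum_quotients:
  "carrier (sum_group UNIV (\<lambda>i::nat. G\<lparr>carrier := Fm\<rparr> Mod Fs_FFs))
     = {\<xi>. (\<forall>i. \<xi> i \<in> (\<lambda>a. Fs_FFs #> a) ` Fm) \<and> finite {i. \<xi> i \<noteq> Fs_FFs}}"
  using normal.factorgroup_is_group[OF normal_Fs_FFs]
  by (subst carrier_sum_group) (auto simp: carrier_FactGroup r_coset_carrier_update)

lemma coset_seq_hom:
  "(\<lambda>x i. Fs_FFs #> x i)
     \<in> hom (dsum_copies G Fm) (sum_group UNIV (\<lambda>i::nat. G\<lparr>carrier := Fm\<rparr> Mod Fs_FFs))"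
proof (rule homI)
  fix x assume "x \<in> carrier (dsum_copies G Fm)"
  then have x: "fin_seq Fm x" by (simp add: carrier_dsum_copies[OF subgroup_Fm])
  have "Fs_FFs #> \<one> = Fs_FFs"
    by (rule coset_mult_one[OF subgroup.subset[OF subgroup_Fs_FFs]])
  then have "{i. Fs_FFs #> x i \<noteq> Fs_FFs} \<subseteq> {i. x i \<noteq> \<one>}" by force
  then have "finite {i. Fs_FFs #> x i \<noteq> Fs_FFs}"
    by (rule finite_subset) (use x in \<open>simp add: fin_seq_def\<close>)
  moreover have "Fs_FFs #> x i \<in> (\<lambda>a. Fs_FFs #> a) ` Fm" for i
    using x by (intro imageI) (simp add: fin_seq_def)
  ultimately show "(\<lambda>i. Fs_FFs #> x i) \<in> carrier (sum_group UNIV (\<lambda>i. G\<lparr>carrier := Fm\<rparr> Mod Fs_FFs))"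
    unfolding carrier_sum_quotients mem_Collect_eq by (intro conjI allI)
next
  fix x y assume "x \<in> carrier (dsum_copies G Fm)" "y \<in> carrier (dsum_copies G Fm)"
  then have xc: "\<And>i. x i \<in> carrier G" and yc: "\<And>i. y i \<in> carrier G"
    by (auto simp: carrier_dsum_copies[OF subgroup_Fm] intro: fin_seq_carrier[OF subgroup_Fm])
  show "(\<lambda>i. Fs_FFs #> (x \<otimes>\<^bsub>dsum_copies G Fm\<^esub> y) i)
      = (\<lambda>i. Fs_FFs #> x i) \<otimes>\<^bsub>sum_group UNIV (\<lambda>i. G\<lparr>carrier := Fm\<rparr> Mod Fs_FFs)\<^esub> (\<lambda>i. Fs_FFs #> y i)"
    by (simp add: mult_dsum_copies set_mult_carrier_update restrict_def
        normal.rcos_sum[OF normal_iff_subgroup[THEN iffD2, OF subgroup_Fs_FFs] xc yc])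
qed

lemma coset_seq_surj:
  "(\<lambda>x i. Fs_FFs #> x i) ` carrier (dsum_copies G Fm)
     = carrier (sum_group UNIV (\<lambda>i::nat. G\<lparr>carrier := Fm\<rparr> Mod Fs_FFs))"
proof
  show "(\<lambda>x i. Fs_FFs #> x i) ` carrier (dsum_copies G Fm)
          \<subseteq> carrier (sum_group UNIV (\<lambda>i. G\<lparr>carrier := Fm\<rparr> Mod Fs_FFs))"
    using coset_seq_hom by (auto simp: hom_def)
next
  show "carrier (sum_group UNIV (\<lambda>i. G\<lparr>carrier := Fm\<rparr> Mod Fs_FFs))
          \<subseteq> (\<lambda>x i. Fs_FFs #> x i) ` carrier (dsum_copies G Fm)"
  proof
    fix \<xi> assume "\<xi> \<in> carrier (sum_group UNIV (\<lambda>i::nat. G\<lparr>carrier := Fm\<rparr> Mod Fs_FFs))"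
    then have \<xi>: "\<forall>i. \<xi> i \<in> (\<lambda>a. Fs_FFs #> a) ` Fm" and fin: "finite {i. \<xi> i \<noteq> Fs_FFs}"
      by (simp_all add: carrier_sum_quotients)
    define r where "r i = (if \<xi> i = Fs_FFs then \<one> else (SOME a. a \<in> Fm \<and> \<xi> i = Fs_FFs #> a))" for i
    have r: "r i \<in> Fm \<and> \<xi> i = Fs_FFs #> r i" for i
    proof (cases "\<xi> i = Fs_FFs")
      case True
      then show ?thesis
        by (simp add: r_def subgroup.one_closed[OF subgroup_Fm]
            coset_mult_one[OF subgroup.subset[OF subgroup_Fs_FFs]])
    next
      case False
      have "\<exists>a. a \<in> Fm \<and> \<xi> i = Fs_FFs #> a" using \<xi> by blast
      from someI_ex[OF this] show ?thesis using False by (simp add: r_def)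
    qed
    have "{i. r i \<noteq> \<one>} \<subseteq> {i. \<xi> i \<noteq> Fs_FFs}" by (auto simp: r_def)
    then have "finite {i. r i \<noteq> \<one>}" using fin by (rule finite_subset)
    then have "fin_seq Fm r" using r by (simp add: fin_seq_def)
    moreover have "\<xi> = (\<lambda>i. Fs_FFs #> r i)" using r by auto
    ultimately show "\<xi> \<in> (\<lambda>x i. Fs_FFs #> x i) ` carrier (dsum_copies G Fm)"
      by (simp add: carrier_dsum_copies[OF subgroup_Fm])
  qed
qed

lemma iter_span_Fs_subset: "iter_span G F Fs \<subseteq> iter_span G F Fm"
  unfolding iter_span_def using Fs_subset_Fm by (intro mono_generate) blast

lemma normal_iter_span_Fs: "iter_span G F Fs \<lhd> G\<lparr>carrier := iter_span G F Fm\<rparr>"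
  by (rule normal_subgroup_restrict[OF subgroup_iter_span[OF subgroup_Fm]
        subgroup_iter_span[OF subgroup_Fs] iter_span_Fs_subset])

lemma coset_iter_sum_hom:
  "(\<lambda>x. iter_span G F Fs #> iter_sum G F x)
     \<in> hom (dsum_copies G Fm) (G\<lparr>carrier := iter_span G F Fm\<rparr> Mod iter_span G F Fs)"
proof (rule homI)
  fix x assume "x \<in> carrier (dsum_copies G Fm)"
  then show "iter_span G F Fs #> iter_sum G F x
               \<in> carrier (G\<lparr>carrier := iter_span G F Fm\<rparr> Mod iter_span G F Fs)"
    using iter_sum_image[OF subgroup_Fm]
    by (auto simp: carrier_dsum_copies[OF subgroup_Fm] carrier_FactGroup r_coset_carrier_update)
next
  fix x y assume "x \<in> carrier (dsum_copies G Fm)" "y \<in> carrier (dsum_copies G Fm)"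
  then have x: "fin_seq Fm x" and y: "fin_seq Fm y"
    by (simp_all add: carrier_dsum_copies[OF subgroup_Fm])
  show "iter_span G F Fs #> iter_sum G F (x \<otimes>\<^bsub>dsum_copies G Fm\<^esub> y)
      = (iter_span G F Fs #> iter_sum G F x)
          \<otimes>\<^bsub>G\<lparr>carrier := iter_span G F Fm\<rparr> Mod iter_span G F Fs\<^esub> (iter_span G F Fs #> iter_sum G F y)"
    using normal.rcos_sum[OF normal_iff_subgroup[THEN iffD2, OF subgroup_iter_span[OF subgroup_Fs]]
        iter_sum_closed[OF subgroup_Fm x] iter_sum_closed[OF subgroup_Fm y]]
    by (simp add: mult_dsum_copies iter_sum_mult[OF subgroup_Fm x y] set_mult_carrier_update)
qed

lemma coset_iter_sum_surj:
  "(\<lambda>x. iter_span G F Fs #> iter_sum G F x) ` carrier (dsum_copies G Fm)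
     = carrier (G\<lparr>carrier := iter_span G F Fm\<rparr> Mod iter_span G F Fs)"
proof -
  have "(\<lambda>x. iter_span G F Fs #> iter_sum G F x) ` carrier (dsum_copies G Fm)
          = (\<lambda>z. iter_span G F Fs #> z) ` iter_sum G F ` carrier (dsum_copies G Fm)"
    by (simp add: image_image)
  then show ?thesis
    by (simp add: carrier_dsum_copies[OF subgroup_Fm] iter_sum_image[OF subgroup_Fm]
        carrier_FactGroup r_coset_carrier_update)
qed

theorem dsum_quotient_iso:
  "\<exists>\<psi>. \<psi> \<in> iso (sum_group UNIV (\<lambda>i::nat. G\<lparr>carrier := Fm\<rparr> Mod Fs_FFs))
                (G\<lparr>carrier := iter_span G F Fm\<rparr> Mod iter_span G F Fs)
     \<and> (\<forall>x \<in> carrier (dsum_copies G Fm).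
          \<psi> (\<lambda>i. Fs_FFs #> x i) = iter_span G F Fs #> iter_sum G F x)"
proof (rule iso_of_surj_homs_same_kernel[OF group_dsum_copies[OF subgroup_Fm] group_sum_quotients
      normal.factorgroup_is_group[OF normal_iter_span_Fs] coset_seq_hom coset_seq_surj
      coset_iter_sum_hom coset_iter_sum_surj])
  fix x assume "x \<in> carrier (dsum_copies G Fm)"
  then have x: "fin_seq Fm x" by (simp add: carrier_dsum_copies[OF subgroup_Fm])
  have "(\<lambda>i. Fs_FFs #> x i) = (\<lambda>_. Fs_FFs) \<longleftrightarrow> (\<forall>i. x i \<in> Fs_FFs)"
    using rcos_eq_self_iff[OF subgroup_Fs_FFs fin_seq_carrier[OF subgroup_Fm x]] by (simp add: fun_eq_iff)
  also have "\<dots> \<longleftrightarrow> iter_sum G F x \<in> iter_span G F Fs"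
    using iter_sum_mem_span_if_mem_Fs_FFs[OF x] mem_Fs_FFs_if_iter_sum_mem_span[OF x] by blast
  also have "\<dots> \<longleftrightarrow> iter_span G F Fs #> iter_sum G F x = iter_span G F Fs"
    using rcos_eq_self_iff[OF subgroup_iter_span[OF subgroup_Fs] iter_sum_closed[OF subgroup_Fm x]]
    by simp
  finally show "(\<lambda>i. Fs_FFs #> x i) = \<one>\<^bsub>sum_group UNIV (\<lambda>i. G\<lparr>carrier := Fm\<rparr> Mod Fs_FFs)\<^esub>
      \<longleftrightarrow> iter_span G F Fs #> iter_sum G F x
            = \<one>\<^bsub>G\<lparr>carrier := iter_span G F Fm\<rparr> Mod iter_span G F Fs\<^esub>"
    by (simp add: restrict_def)
qed

end

section \<open>Application to Witt vectors\<close>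

lemma witt_dsum_eq: "witt_dsum p n = dsum_copies (WittGroup p n)"
  by (simp add: fun_eq_iff witt_dsum_def dsum_copies_def)

lemma frob_sum_eq: "frob_sum p n = iter_sum (WittGroup p n) (witt_frob p)"
  by (simp add: fun_eq_iff frob_sum_def iter_sum_def WittGroup_simps)

lemma witt_h_eq: "witt_h p n = twisted_shift (WittGroup p n) (witt_frob p)"
  by (simp add: fun_eq_iff witt_h_def twisted_shift_def)

lemma filF_eq: "filF p v n m = iter_span (WittGroup p n) (witt_frob p) (fil p v n m)"
  by (simp add: filF_def iter_span_def)

lemma (in witt_dvf) endo_pair_fil:
  "endo_pair W (witt_frob p) (fil p v n (int (m div p))) (fil p v n (int m))"
proof (intro endo_pair.intro endo_pair_axioms.intro)
  show "comm_group W" by (rule W.comm_group_axioms)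
  show "witt_frob p \<in> hom W W" by (rule witt_frob_hom)
  show "a = \<one>\<^bsub>W\<^esub>" if "witt_frob p a = \<one>\<^bsub>W\<^esub>" for a
    using that by (rule witt_frob_eq_zero)
  show "subgroup (fil p v n (int (m div p))) W" "subgroup (fil p v n (int m)) W"
    by (simp_all add: subgroup_fil)
  show "fil p v n (int (m div p)) \<subseteq> fil p v n (int m)"
    by (intro fil_mono) simp
  show "witt_frob p a \<in> fil p v n (int m)" if "a \<in> fil p v n (int (m div p))" for a
    using that fil_subset_carrier witt_frob_mem_fil_iff by (auto simp: zdiv_int)
  show "a \<in> fil p v n (int (m div p))" if "a \<in> carrier W" "witt_frob p a \<in> fil p v n (int m)" for a
    using that witt_frob_mem_fil_iff by (simp add: zdiv_int)
qed

theorem proposition4p1: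
  fixes p n m :: nat and v :: "'a::field \<Rightarrow> int"
  assumes "Factorial_Ring.prime p" and "of_nat p = (0::'a)"
    and "normalized_dvf v"
    and "n \<ge> 1" and "m \<ge> 1"
  defines "W \<equiv> (WittGroup p n :: (nat \<Rightarrow> 'a) monoid)"
    and "Fm \<equiv> fil p v n (int m)"
    and "Fs \<equiv> fil p v n (int (m div p))"
  shows
    "(witt_h p n \<in> hom (witt_dsum p n Fs) (witt_dsum p n Fm)
     \<and> inj_on (witt_h p n) (carrier (witt_dsum p n Fs))
     \<and> frob_sum p n \<in> hom (witt_dsum p n Fm) (W\<lparr>carrier := filF p v n (int m)\<rparr>)
     \<and> witt_h p n ` carrier (witt_dsum p n Fs)
         = kernel (witt_dsum p n Fm) (W\<lparr>carrier := filF p v n (int m)\<rparr>) (frob_sum p n)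
     \<and> frob_sum p n ` carrier (witt_dsum p n Fm) = filF p v n (int m))
   \<and>
    (\<exists>\<psi>. \<psi> \<in> iso (sum_group UNIV (\<lambda>i. (W\<lparr>carrier := Fm\<rparr>) Mod (Fs <#>\<^bsub>W\<^esub> witt_frob p ` Fs)))
                 ((W\<lparr>carrier := filF p v n (int m)\<rparr>) Mod filF p v n (int (m div p)))
       \<and> (\<forall>x \<in> carrier (witt_dsum p n Fm).
            \<psi> (\<lambda>i. (Fs <#>\<^bsub>W\<^esub> witt_frob p ` Fs) #>\<^bsub>W\<^esub> x i)
              = filF p v n (int (m div p)) #>\<^bsub>W\<^esub> frob_sum p n x))"
proof -
  interpret witt_dvf p n v using assms(1-3) by unfold_locales
  interpret E: endo_pair W "witt_frob p" Fs Fm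
    unfolding W_def Fs_def Fm_def by (rule endo_pair_fil)
  have "witt_dsum p n = dsum_copies W" "frob_sum p n = iter_sum W (witt_frob p)"
    "witt_h p n = twisted_shift W (witt_frob p)"
    "filF p v n (int m) = iter_span W (witt_frob p) Fm"
    "filF p v n (int (m div p)) = iter_span W (witt_frob p) Fs"
    by (simp_all add: W_def Fm_def Fs_def witt_dsum_eq frob_sum_eq witt_h_eq filF_eq)
  then show ?thesis
    using E.dsum_copies_exact E.dsum_quotient_iso by (simp add: E.Fs_FFs_def)
qed

end
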